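(* Let $V$ be a simple Yetter-Drinfeld module over $H=B(n,w,\gamma)$ with $\dim_\Bbbk V=p+1$ for some $p\ge0$, and let $v\in V$ be a standard element of type $(\alpha,\beta,x^rg^i)$ with $\alpha,\beta\in\Bbbk^*$, $r,i\in\mathbb{Z}$. If $\beta^n=1$, then $c_\beta^{r,i}(p+1,l)=0$ for all $0\le l\le p$.
   Context: $\Bbbk$ is an algebraically closed field of characteristic $0$; $n,w$ positive integers, $\gamma$ a primitive $n$-th root of unity. $H=B(n,w,\gamma)$ is the Hopf algebra generated by $x^{\pm1},g,y$ with relations $xx^{-1}=x^{-1}x=1$, $xg=gx$, $xy=yx$, $yg=\gamma gy$, $y^n=1-x^w=1-g^n$, with $\Delta(x)=x\otimes x$, $\Delta(g)=g\otimes g$, $\Delta(y)=y\otimes g+1\otimes y$, $\varepsilon(x)=\varepsilon(g)=1$, $\varepsilon(y)=0$, $S(x)=x^{-1}$, $S(g)=g^{-1}$, $S(y)=-yg^{-1}$; $G(H)=\{g^jx^k\}$. A (left-left) Yetter-Drinfeld module is a left $H$-module, left $H$-comodule $(V,\cdot,\delta)$ with $\delta(h\cdot v)=h_{(1)}v_{(-1)}S(h_{(3)})\otimes h_{(2)}\cdot v_{(0)}$; simple means no nonzero proper Yetter-Drinfeld submodules. A nonzero $v\in V$ is a standard element of type $(\alpha,\beta,h)$ if $h\in G(H)$, $\alpha,\beta\in\Bbbk^*$, $x\cdot v=\alpha v$, $g\cdot v=\beta v$, $\delta(v)=h\otimes v$. The elements $c_\beta^{r,i}(k,l)\in H$ ($0\le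 l\le k$) are defined by $c_\beta^{r,i}(0,0)=x^rg^i$ and, for $k\ge0$: $c_\beta^{r,i}(k+1,0)=c_\beta^{r,i}(k,0)S(y)+\beta yc_\beta^{r,i}(k,0)S(g)$; for $0<l<k+1$, $c_\beta^{r,i}(k+1,l)=c_\beta^{r,i}(k,l)S(y)+\beta\gamma^{-l}yc_\beta^{r,i}(k,l)S(g)+c_\beta^{r,i}(k,l-1)S(g)$; $c_\beta^{r,i}(k+1,k+1)=c_\beta^{r,i}(k,k)S(g)$. *)

theory Defs
  imports "HOL-Computational_Algebra.Polynomial"
begin

text \<open>Basis: y^j g^a x^k with 0 <= j < n, 0 <= a < n, k an integer; the index (j,a,k)
  stands for that basis element.\<close>

type_synonym bidx = "nat \<times> nat \<times> int"
type_synonym 'k hel = "bidx \<Rightarrow> 'k"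
type_synonym 'k vec = "nat \<Rightarrow> 'k"

definition supp :: "('a \<Rightarrow> 'b::zero) \<Rightarrow> 'a set" where
  "supp f = {b. f b \<noteq> 0}"

definition suppV :: "('a \<Rightarrow> ('k::zero) vec) \<Rightarrow> 'a set" where
  "suppV f = {b. f b \<noteq> (\<lambda>_. 0)}"

definition valid :: "nat \<Rightarrow> bidx \<Rightarrow> bool" where
  "valid n b \<longleftrightarrow> fst b < n \<and> fst (snd b) < n"

definition Hc :: "nat \<Rightarrow> ('k::field) hel set" where
  "Hc n = {h. finite (supp h) \<and> (\<forall>b. h b \<noteq> 0 \<longrightarrow> valid n b)}"

definition bas :: "bidx \<Rightarrow> ('k::field) hel" where
  "bas b = (\<lambda>b'. if b' = b then 1 else 0)"

definition hadd :: "('k::field) hel \<Rightarrow> 'k hel \<Rightarrow> 'k hel" where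
  "hadd h h' = (\<lambda>b. h b + h' b)"

definition hsc :: "'k::field \<Rightarrow> 'k hel \<Rightarrow> 'k hel" where
  "hsc c h = (\<lambda>b. c * h b)"

text \<open>normal form of g^a x^k (a, k integers), using g^n = x^w\<close>
definition gxi :: "nat \<Rightarrow> nat \<Rightarrow> int \<Rightarrow> int \<Rightarrow> nat \<times> int" where
  "gxi n w a k = (nat (a mod int n), k + int w * (a div int n))"

text \<open>the basis element y^j g^a x^k, for j < n and arbitrary integers a, k\<close>
definition mon :: "nat \<Rightarrow> nat \<Rightarrow> nat \<Rightarrow> int \<Rightarrow> int \<Rightarrow> ('k::field) hel" where
  "mon n w j a k = bas (j, fst (gxi n w a k), snd (gxi n w a k))"

text \<open>product of two basis elements (valid indices):
  y^j g^a x^k * y^j' g^a' x^k' = gamma^(-a j') y^(j+j') g^(a+a') x^(k+k'),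
  and y^(j+j') = y^(j+j'-n) (1 - x^w) if j+j' >= n.\<close>
definition mb :: "nat \<Rightarrow> nat \<Rightarrow> 'k::field \<Rightarrow> bidx \<Rightarrow> bidx \<Rightarrow> 'k hel" where
  "mb n w \<gamma> b b' =
    (let j = fst b; a = fst (snd b); k = snd (snd b);
         j' = fst b'; a' = fst (snd b'); k' = snd (snd b');
         c = (inverse \<gamma>) ^ (a * j') in
     if j + j' < n then hsc c (mon n w (j + j') (int a + int a') (k + k'))
     else hsc c (\<lambda>t. mon n w (j + j' - n) (int a + int a') (k + k') t
                    - mon n w (j + j' - n) (int a + int a') (k + k' + int w) t))"

definition hmul :: "nat \<Rightarrow> nat \<Rightarrow> 'k::field \<Rightarrow> 'k hel \<Rightarrow> 'k hel \<Rightarrow> 'k hel" where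
  "hmul n w \<gamma> h h' = (\<lambda>t. \<Sum>b\<in>supp h. \<Sum>b'\<in>supp h'. h b * h' b' * mb n w \<gamma> b b' t)"

definition oneH :: "('k::field) hel" where "oneH = bas (0, 0, 0)"
definition Xe :: "nat \<Rightarrow> nat \<Rightarrow> ('k::field) hel" where "Xe n w = mon n w 0 0 1"
definition Ge :: "nat \<Rightarrow> nat \<Rightarrow> ('k::field) hel" where "Ge n w = mon n w 0 1 0"
definition Ginv :: "nat \<Rightarrow> nat \<Rightarrow> ('k::field) hel" where "Ginv n w = mon n w 0 (-1) 0"
text \<open>y; if n = 1 then y = y^n = 1 - x^w\<close>
definition Ye :: "nat \<Rightarrow> nat \<Rightarrow> ('k::field) hel" where
  "Ye n w = (if 1 < n then mon n w 1 0 0 else (\<lambda>t. oneH t - mon n w 0 0 (int w) t))"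

definition SY :: "nat \<Rightarrow> nat \<Rightarrow> 'k::field \<Rightarrow> 'k hel" where
  "SY n w \<gamma> = hsc (-1) (hmul n w \<gamma> (Ye n w) (Ginv n w))"

text \<open>Antipode on basis elements: S(y^j g^a x^k) = g^{-a} x^{-k} S(y)^j\<close>
fun Sbas :: "nat \<Rightarrow> nat \<Rightarrow> 'k::field \<Rightarrow> nat \<Rightarrow> nat \<Rightarrow> int \<Rightarrow> 'k hel" where
  "Sbas n w \<gamma> 0 a k = mon n w 0 (- int a) (- k)"
| "Sbas n w \<gamma> (Suc j) a k = hmul n w \<gamma> (Sbas n w \<gamma> j a k) (SY n w \<gamma>)"

definition Santi :: "nat \<Rightarrow> nat \<Rightarrow> 'k::field \<Rightarrow> 'k hel \<Rightarrow> 'k hel" where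
  "Santi n w \<gamma> h = (\<lambda>t. \<Sum>b\<in>supp h. h b * Sbas n w \<gamma> (fst b) (fst (snd b)) (snd (snd b)) t)"

text \<open>H \<otimes> H as coefficient functions on pairs of indices\<close>
definition tens :: "('k::field) hel \<Rightarrow> 'k hel \<Rightarrow> (bidx \<times> bidx \<Rightarrow> 'k)" where
  "tens h h' = (\<lambda>(b, b'). h b * h' b')"

definition tmul :: "nat \<Rightarrow> nat \<Rightarrow> 'k::field \<Rightarrow> (bidx \<times> bidx \<Rightarrow> 'k) \<Rightarrow> (bidx \<times> bidx \<Rightarrow> 'k)
    \<Rightarrow> (bidx \<times> bidx \<Rightarrow> 'k)" where
  "tmul n w \<gamma> u u' = (\<lambda>(t, t'). \<Sum>p\<in>supp u. \<Sum>p'\<in>supp u'.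
      u p * u' p' * mb n w \<gamma> (fst p) (fst p') t * mb n w \<gamma> (snd p) (snd p') t')"

definition DY :: "nat \<Rightarrow> nat \<Rightarrow> (bidx \<times> bidx \<Rightarrow> 'k::field)" where
  "DY n w = (\<lambda>q. tens (Ye n w) (Ge n w) q + tens oneH (Ye n w) q)"

text \<open>Coproduct on basis elements: Delta(y^j g^a x^k) = Delta(y)^j (g^a x^k \<otimes> g^a x^k)\<close>
fun Dbas :: "nat \<Rightarrow> nat \<Rightarrow> 'k::field \<Rightarrow> nat \<Rightarrow> nat \<Rightarrow> int \<Rightarrow> (bidx \<times> bidx \<Rightarrow> 'k)" where
  "Dbas n w \<gamma> 0 a k = tens (bas (0, a, k)) (bas (0, a, k))"
| "Dbas n w \<gamma> (Suc j) a k = tmul n w \<gamma> (DY n w) (Dbas n w \<gamma> j a k)"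

definition Delta :: "nat \<Rightarrow> nat \<Rightarrow> 'k::field \<Rightarrow> 'k hel \<Rightarrow> (bidx \<times> bidx \<Rightarrow> 'k)" where
  "Delta n w \<gamma> h = (\<lambda>q. \<Sum>b\<in>supp h. h b * Dbas n w \<gamma> (fst b) (fst (snd b)) (snd (snd b)) q)"

text \<open>(Delta \<otimes> id) Delta, giving h_(1) \<otimes> h_(2) \<otimes> h_(3)\<close>
definition Delta2 :: "nat \<Rightarrow> nat \<Rightarrow> 'k::field \<Rightarrow> 'k hel \<Rightarrow> (bidx \<times> bidx \<times> bidx \<Rightarrow> 'k)" where
  "Delta2 n w \<gamma> h = (\<lambda>(b1, b2, b3). \<Sum>b\<in>{b. Delta n w \<gamma> h (b, b3) \<noteq> 0}.
      Delta n w \<gamma> h (b, b3) * Delta n w \<gamma> (bas b) (b1, b2))"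

definition epsH :: "('k::field) hel \<Rightarrow> 'k" where
  "epsH h = (\<Sum>b\<in>supp h. if fst b = 0 then h b else 0)"

text \<open>The (p+1)-dimensional space k^(p+1), as coordinate functions vanishing beyond p.\<close>
definition Vc :: "nat \<Rightarrow> ('k::field) vec set" where
  "Vc p = {v. \<forall>m>p. v m = 0}"

text \<open>Left-left Yetter-Drinfeld module structure on k^(p+1):
  act = module action, co = coaction, co v b = component of delta(v) at basis element b of H.\<close>
definition is_YD :: "nat \<Rightarrow> nat \<Rightarrow> 'k::field \<Rightarrow> nat \<Rightarrow> ('k hel \<Rightarrow> 'k vec \<Rightarrow> 'k vec)
    \<Rightarrow> ('k vec \<Rightarrow> bidx \<Rightarrow> 'k vec) \<Rightarrow> bool" where
  "is_YD n w \<gamma> p act co \<longleftrightarrow>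
    \<comment> \<open>module\<close>
    (\<forall>h\<in>Hc n. \<forall>v\<in>Vc p. act h v \<in> Vc p) \<and>
    (\<forall>h\<in>Hc n. \<forall>u\<in>Vc p. \<forall>v\<in>Vc p. act h (\<lambda>m. u m + v m) = (\<lambda>m. act h u m + act h v m)) \<and>
    (\<forall>h\<in>Hc n. \<forall>c. \<forall>v\<in>Vc p. act h (\<lambda>m. c * v m) = (\<lambda>m. c * act h v m)) \<and>
    (\<forall>h\<in>Hc n. \<forall>h'\<in>Hc n. \<forall>v\<in>Vc p. act (hadd h h') v = (\<lambda>m. act h v m + act h' v m)) \<and>
    (\<forall>h\<in>Hc n. \<forall>c. \<forall>v\<in>Vc p. act (hsc c h) v = (\<lambda>m. c * act h v m)) \<and>
    (\<forall>v\<in>Vc p. act oneH v = v) \<and>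
    (\<forall>h\<in>Hc n. \<forall>h'\<in>Hc n. \<forall>v\<in>Vc p. act (hmul n w \<gamma> h h') v = act h (act h' v)) \<and>
    \<comment> \<open>comodule\<close>
    (\<forall>v\<in>Vc p. finite (suppV (co v)) \<and> (\<forall>b. co v b \<in> Vc p) \<and>
       (\<forall>b. co v b \<noteq> (\<lambda>_. 0) \<longrightarrow> valid n b)) \<and>
    (\<forall>u\<in>Vc p. \<forall>v\<in>Vc p. \<forall>b. co (\<lambda>m. u m + v m) b = (\<lambda>m. co u b m + co v b m)) \<and>
    (\<forall>c. \<forall>v\<in>Vc p. \<forall>b. co (\<lambda>m. c * v m) b = (\<lambda>m. c * co v b m)) \<and>
    (\<forall>v\<in>Vc p. \<forall>b1 b2. co (co v b1) b2 =
        (\<lambda>m. \<Sum>b\<in>suppV (co v). Delta n w \<gamma> (bas b) (b1, b2) * co v b m)) \<and>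
    (\<forall>v\<in>Vc p. (\<lambda>m. \<Sum>b\<in>suppV (co v). epsH (bas b :: 'k hel) * co v b m) = v) \<and>
    \<comment> \<open>Yetter-Drinfeld compatibility\<close>
    (\<forall>h\<in>Hc n. \<forall>v\<in>Vc p. \<forall>t. co (act h v) t =
        (\<lambda>m. \<Sum>q\<in>supp (Delta2 n w \<gamma> h). \<Sum>b\<in>suppV (co v).
           Delta2 n w \<gamma> h q
           * hmul n w \<gamma> (hmul n w \<gamma> (bas (fst q)) (bas b)) (Santi n w \<gamma> (bas (snd (snd q)))) t
           * act (bas (fst (snd q))) (co v b) m))"

definition is_simple_YD :: "nat \<Rightarrow> nat \<Rightarrow> 'k::field \<Rightarrow> nat \<Rightarrow> ('k hel \<Rightarrow> 'k vec \<Rightarrow> 'k vec)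
    \<Rightarrow> ('k vec \<Rightarrow> bidx \<Rightarrow> 'k vec) \<Rightarrow> bool" where
  "is_simple_YD n w \<gamma> p act co \<longleftrightarrow>
    is_YD n w \<gamma> p act co \<and>
    (\<forall>W. W \<subseteq> Vc p \<and> (\<lambda>_. 0) \<in> W \<and>
         (\<forall>u\<in>W. \<forall>v\<in>W. (\<lambda>m. u m + v m) \<in> W) \<and> (\<forall>c. \<forall>v\<in>W. (\<lambda>m. c * v m) \<in> W) \<and>
         (\<forall>h\<in>Hc n. \<forall>v\<in>W. act h v \<in> W) \<and> (\<forall>v\<in>W. \<forall>b. co v b \<in> W)
       \<longrightarrow> W = {\<lambda>_. 0} \<or> W = Vc p)"

definition standard :: "nat \<Rightarrow> nat \<Rightarrow> nat \<Rightarrow> ('k::field hel \<Rightarrow> 'k vec \<Rightarrow> 'k vec)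
    \<Rightarrow> ('k vec \<Rightarrow> bidx \<Rightarrow> 'k vec) \<Rightarrow> 'k vec \<Rightarrow> 'k \<Rightarrow> 'k \<Rightarrow> int \<Rightarrow> int \<Rightarrow> bool" where
  "standard n w p act co v \<alpha> \<beta> r i \<longleftrightarrow>
    v \<in> Vc p \<and> v \<noteq> (\<lambda>_. 0) \<and> \<alpha> \<noteq> 0 \<and> \<beta> \<noteq> 0 \<and>
    act (Xe n w) v = (\<lambda>m. \<alpha> * v m) \<and> act (Ge n w) v = (\<lambda>m. \<beta> * v m) \<and>
    co v = (\<lambda>b. if b = (0, fst (gxi n w i r), snd (gxi n w i r)) then v else (\<lambda>_. 0))"

text \<open>the elements c_beta^{r,i}(k,l) (set to 0 outside 0 <= l <= k)\<close>
fun cc :: "nat \<Rightarrow> nat \<Rightarrow> 'k::field \<Rightarrow> 'k \<Rightarrow> int \<Rightarrow> int \<Rightarrow> nat \<Rightarrow> nat \<Rightarrow> 'k hel" where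
  "cc n w \<gamma> \<beta> r i 0 l = (if l = 0 then mon n w 0 i r else (\<lambda>_. 0))"
| "cc n w \<gamma> \<beta> r i (Suc k) l =
    (if l = 0 then
       hadd (hmul n w \<gamma> (cc n w \<gamma> \<beta> r i k 0) (SY n w \<gamma>))
            (hsc \<beta> (hmul n w \<gamma> (hmul n w \<gamma> (Ye n w) (cc n w \<gamma> \<beta> r i k 0)) (Ginv n w)))
     else if l < Suc k then
       hadd (hadd (hmul n w \<gamma> (cc n w \<gamma> \<beta> r i k l) (SY n w \<gamma>))
                  (hsc (\<beta> * (inverse \<gamma>) ^ l)
                       (hmul n w \<gamma> (hmul n w \<gamma> (Ye n w) (cc n w \<gamma> \<beta> r i k l)) (Ginv n w))))
            (hmul n w \<gamma> (cc n w \<gamma> \<beta> r i k (l - 1)) (Ginv n w))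
     else if l = Suc k then hmul n w \<gamma> (cc n w \<gamma> \<beta> r i k k) (Ginv n w)
     else (\<lambda>_. 0))"

end

theory Submission
  imports Defs "HOL-Library.Function_Algebras"
begin

text \<open>
  Write v_l = y^l v.  Since g y = \<gamma>^-1 y g, each v_l is a g-eigenvector with eigenvalue
  \<beta> \<gamma>^-l, and these eigenvalues are pairwise distinct for l < n; so the nonzero v_l are
  linearly independent.  Moreover y^n v = (1 - x^w) v = 0, because x^w = g^n acts on v by
  \<beta>^n = 1.  Induction on k with the Yetter-Drinfeld condition for y gives
  \<delta>(v_k) = \<Sum>l\<le>k. c(k,l) \<otimes> v_l, so the span of the v_l is a Yetter-Drinfeld submodule.
  By simplicity it is all of V, hence v_0, ..., v_p is a basis and v_(p+1) = 0; then
  0 = \<delta>(v_(p+1)) = \<Sum>l\<le>p. c(p+1,l) \<otimes> v_l forces c(p+1,l) = 0.  For n = 1 the algebra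
  is commutative, \<gamma> = \<beta> = 1, and c(k,l) = 0 for l < k by a direct computation.
\<close>

section \<open>Arithmetic in the model of H\<close>

lemma supp_bas [simp]: "supp (bas b :: 'k::field hel) = {b}"
  by (auto simp: supp_def bas_def)

lemma bas_apply: "bas b t = (if t = b then 1 else 0)"
  by (simp add: bas_def)

lemma hmul_bas_bas: "hmul n w \<gamma> (bas b) (bas b') = mb n w \<gamma> b b'"
  unfolding hmul_def supp_bas by (simp add: bas_def)

lemma mon_of_nat: "a < n \<Longrightarrow> mon n w j (int a) k = bas (j, a, k)"
  by (simp add: mon_def gxi_def)

lemma mb_eq:
  "mb n w \<gamma> (j, a, k) (j', a', k') =
   (if j + j' < n then hsc ((inverse \<gamma>) ^ (a * j')) (mon n w (j + j') (int a + int a') (k + k'))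
    else hsc ((inverse \<gamma>) ^ (a * j')) (\<lambda>t. mon n w (j + j' - n) (int a + int a') (k + k') t
                    - mon n w (j + j' - n) (int a + int a') (k + k' + int w) t))"
  by (simp add: mb_def Let_def)

lemma mb_no_wrap:
  assumes "j + j' < n" "a + a' < n"
  shows "mb n w \<gamma> (j, a, k) (j', a', k') = hsc ((inverse \<gamma>) ^ (a * j')) (bas (j + j', a + a', k + k'))"
  using assms by (simp add: mb_eq mon_of_nat flip: of_nat_add)

lemma hsc_1 [simp]: "hsc 1 h = h"
  by (simp add: hsc_def)

lemma hsc_zero [simp]: "hsc c (\<lambda>_. 0) = (\<lambda>_. 0)"
  by (simp add: hsc_def)

lemma hadd_zero [simp]: "hadd (\<lambda>_. 0) (\<lambda>_. 0) = (\<lambda>_. 0)"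
  by (simp add: hadd_def)

lemma hmul_zero_left [simp]: "hmul n w \<gamma> (\<lambda>_. 0) g = (\<lambda>_. 0)"
  by (simp add: hmul_def supp_def)

lemma hmul_zero_right [simp]: "hmul n w \<gamma> g (\<lambda>_. 0) = (\<lambda>_. 0)"
  by (simp add: hmul_def supp_def)

lemma hmul_eq_sum_left:
  assumes "finite A" "supp f \<subseteq> A"
  shows "hmul n w \<gamma> f g t = (\<Sum>a\<in>A. f a * (\<Sum>b\<in>supp g. g b * mb n w \<gamma> a b t))"
proof -
  have "hmul n w \<gamma> f g t = (\<Sum>a\<in>supp f. f a * (\<Sum>b\<in>supp g. g b * mb n w \<gamma> a b t))"
    unfolding hmul_def by (simp add: sum_distrib_left mult.assoc)
  also have "\<dots> = (\<Sum>a\<in>A. f a * (\<Sum>b\<in>supp g. g b * mb n w \<gamma> a b t))"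
    by (rule sum.mono_neutral_left) (use assms in \<open>auto simp: supp_def\<close>)
  finally show ?thesis .
qed

lemma hmul_bas_left: "hmul n w \<gamma> (bas a) g t = (\<Sum>b\<in>supp g. g b * mb n w \<gamma> a b t)"
  by (subst hmul_eq_sum_left[of "{a}"]) (auto simp: bas_apply)

lemma hmul_linear_left:
  assumes "finite B" "supp h \<subseteq> B"
  shows "hmul n w \<gamma> h g t = (\<Sum>b\<in>B. h b * hmul n w \<gamma> (bas b) g t)"
  using hmul_eq_sum_left[OF assms] by (simp add: hmul_bas_left)

lemma hmul_linear_right:
  assumes "finite B" "supp h \<subseteq> B"
  shows "hmul n w \<gamma> g h t = (\<Sum>b\<in>B. h b * hmul n w \<gamma> g (bas b) t)"
proof -
  have "hmul n w \<gamma> g h t = (\<Sum>a\<in>supp g. \<Sum>b\<in>B. g a * h b * mb n w \<gamma> a b t)"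
    unfolding hmul_def
    by (rule sum.cong[OF refl], rule sum.mono_neutral_left) (use assms in \<open>auto simp: supp_def\<close>)
  also have "\<dots> = (\<Sum>b\<in>B. \<Sum>a\<in>supp g. g a * h b * mb n w \<gamma> a b t)"
    by (rule sum.swap)
  also have "\<dots> = (\<Sum>b\<in>B. h b * hmul n w \<gamma> g (bas b) t)"
    unfolding hmul_def supp_bas by (simp add: sum_distrib_left bas_apply mult_ac)
  finally show ?thesis .
qed

lemma hmul_sum_left:
  assumes B: "finite B" and F: "\<And>b. b \<in> B \<Longrightarrow> finite (supp (F b))"
  shows "hmul n w \<gamma> (\<lambda>s. \<Sum>b\<in>B. c b * F b s) g t = (\<Sum>b\<in>B. c b * hmul n w \<gamma> (F b) g t)"
proof -
  define A where "A = (\<Union>b\<in>B. supp (F b))"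
  define K where "K a = (\<Sum>b'\<in>supp g. g b' * mb n w \<gamma> a b' t)" for a
  have fA: "finite A"
    using B F by (simp add: A_def)
  have "supp (\<lambda>s. \<Sum>b\<in>B. c b * F b s) \<subseteq> A"
  proof
    fix s assume "s \<in> supp (\<lambda>s. \<Sum>b\<in>B. c b * F b s)"
    then obtain b where "b \<in> B" "c b * F b s \<noteq> 0"
      by (auto simp: supp_def intro: sum.not_neutral_contains_not_neutral)
    then show "s \<in> A" by (auto simp: A_def supp_def)
  qed
  then have "hmul n w \<gamma> (\<lambda>s. \<Sum>b\<in>B. c b * F b s) g t = (\<Sum>a\<in>A. (\<Sum>b\<in>B. c b * F b a) * K a)"
    unfolding K_def by (rule hmul_eq_sum_left[OF fA])
  also have "\<dots> = (\<Sum>a\<in>A. \<Sum>b\<in>B. c b * (F b a * K a))"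
    by (simp add: sum_distrib_right mult.assoc)
  also have "\<dots> = (\<Sum>b\<in>B. c b * (\<Sum>a\<in>A. F b a * K a))"
    by (subst sum.swap) (simp add: sum_distrib_left)
  also have "\<dots> = (\<Sum>b\<in>B. c b * hmul n w \<gamma> (F b) g t)"
    unfolding K_def by (rule sum.cong[OF refl], subst hmul_eq_sum_left[OF fA]) (auto simp: A_def)
  finally show ?thesis .
qed

lemma HcI: "finite (supp h) \<Longrightarrow> (\<And>b. h b \<noteq> 0 \<Longrightarrow> valid n b) \<Longrightarrow> h \<in> Hc n"
  unfolding Hc_def by blast

lemma Hc_valid: "h \<in> Hc n \<Longrightarrow> h b \<noteq> 0 \<Longrightarrow> valid n b"
  unfolding Hc_def by blast

lemma Hc_finite_supp: "h \<in> Hc n \<Longrightarrow> finite (supp h)"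
  unfolding Hc_def by blast

lemma Hc_zero: "(\<lambda>_. 0) \<in> Hc n"
  by (simp add: Hc_def supp_def)

lemma Hc_bas: "valid n b \<Longrightarrow> bas b \<in> Hc n"
  by (auto simp: Hc_def bas_def supp_def)

lemma Hc_bas': "j < n \<Longrightarrow> a < n \<Longrightarrow> bas (j, a, k) \<in> Hc n"
  by (simp add: Hc_bas valid_def)

lemma Hc_mon: "0 < n \<Longrightarrow> j < n \<Longrightarrow> mon n w j a k \<in> Hc n"
  unfolding mon_def by (rule Hc_bas) (simp add: valid_def gxi_def nat_less_iff)

lemma Hc_hsc: "h \<in> Hc n \<Longrightarrow> hsc c h \<in> Hc n"
  unfolding Hc_def hsc_def by (auto intro: finite_subset[of _ "supp h"] simp: supp_def)

lemma Hc_combine: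
  fixes h h' f :: "'k::field hel"
  assumes "h \<in> Hc n" "h' \<in> Hc n" "\<And>t. h t = 0 \<Longrightarrow> h' t = 0 \<Longrightarrow> f t = 0"
  shows "f \<in> Hc n"
proof (rule HcI)
  show "finite (supp f)"
    by (rule finite_subset[of _ "supp h \<union> supp h'"])
      (use assms in \<open>auto simp: supp_def Hc_def\<close>)
next
  fix b assume "f b \<noteq> 0"
  then have "h b \<noteq> 0 \<or> h' b \<noteq> 0"
    using assms(3) by blast
  then show "valid n b"
    using assms(1,2) Hc_valid by blast
qed

lemma Hc_hadd: "h \<in> Hc n \<Longrightarrow> h' \<in> Hc n \<Longrightarrow> hadd h h' \<in> Hc n"
  by (rule Hc_combine[of h n h']) (auto simp: hadd_def)

lemma Hc_diff: "h \<in> Hc n \<Longrightarrow> h' \<in> Hc n \<Longrightarrow> (\<lambda>t. h t - h' t) \<in> Hc n"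
  by (rule Hc_combine[of h n h']) auto

lemma Hc_mb: "0 < n \<Longrightarrow> fst a < n \<Longrightarrow> fst b < n \<Longrightarrow> mb n w \<gamma> a b \<in> Hc n"
  unfolding mb_def Let_def by (auto intro!: Hc_hsc Hc_mon Hc_diff)

lemma Hc_hmul:
  assumes n: "0 < n" and f: "f \<in> Hc n" and g: "g \<in> Hc n"
  shows "hmul n w \<gamma> f g \<in> Hc n"
proof (rule HcI)
  have factors: "\<exists>a\<in>supp f. \<exists>b\<in>supp g. mb n w \<gamma> a b t \<noteq> 0"
    if "hmul n w \<gamma> f g t \<noteq> 0" for t
  proof -
    have "(\<Sum>a\<in>supp f. \<Sum>b\<in>supp g. f a * g b * mb n w \<gamma> a b t) \<noteq> 0"
      using that by (simp add: hmul_def)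
    then obtain a where "a \<in> supp f" "(\<Sum>b\<in>supp g. f a * g b * mb n w \<gamma> a b t) \<noteq> 0"
      by (meson sum.neutral)
    then obtain b where "b \<in> supp g" "f a * g b * mb n w \<gamma> a b t \<noteq> 0"
      by (meson sum.neutral)
    then show ?thesis using \<open>a \<in> supp f\<close> by auto
  qed
  have mb_Hc: "mb n w \<gamma> a b \<in> Hc n" if "a \<in> supp f" "b \<in> supp g" for a b
    using that n Hc_valid[OF f, of a] Hc_valid[OF g, of b]
    by (intro Hc_mb) (auto simp: supp_def valid_def)
  have "supp (hmul n w \<gamma> f g) \<subseteq> (\<Union>a\<in>supp f. \<Union>b\<in>supp g. supp (mb n w \<gamma> a b))"
    using factors by (auto simp: supp_def)
  then show "finite (supp (hmul n w \<gamma> f g))"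
    using f g mb_Hc by (meson Hc_finite_supp finite_UN_I finite_subset)
  show "valid n t" if "hmul n w \<gamma> f g t \<noteq> 0" for t
    using factors[OF that] mb_Hc Hc_valid by blast
qed

lemma hmul_one_left:
  assumes "h \<in> Hc n"
  shows "hmul n w \<gamma> oneH h = h"
proof
  fix t
  have fin: "finite (supp h)"
    using assms by (rule Hc_finite_supp)
  have "hmul n w \<gamma> oneH h t = (\<Sum>b\<in>supp h. h b * hmul n w \<gamma> oneH (bas b) t)"
    by (rule hmul_linear_right[OF fin subset_refl])
  also have "\<dots> = (\<Sum>b\<in>supp h. if t = b then h b else 0)"
  proof (rule sum.cong[OF refl])
    fix b assume "b \<in> supp h"
    then obtain j a k where "b = (j, a, k)" "j < n" "a < n"
      using assms Hc_valid by (cases b) (fastforce simp: supp_def valid_def)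
    then show "h b * hmul n w \<gamma> oneH (bas b) t = (if t = b then h b else 0)"
      using mb_no_wrap[of 0 j n 0 a w \<gamma> 0 k] by (simp add: oneH_def hmul_bas_bas bas_apply)
  qed
  also have "\<dots> = h t"
    using fin by (simp add: sum.delta supp_def)
  finally show "hmul n w \<gamma> oneH h t = h t" .
qed

lemma Hc_cc:
  fixes \<gamma> :: "'k::field"
  assumes "0 < n" "(Ye n w :: 'k hel) \<in> Hc n" "(Ginv n w :: 'k hel) \<in> Hc n" "SY n w \<gamma> \<in> Hc n"
  shows "cc n w \<gamma> \<beta> r i k l \<in> Hc n"
proof (induction k arbitrary: l)
  case 0
  show ?case using assms by (simp add: Hc_mon Hc_zero)
next
  case (Suc k)
  show ?case using Suc.IH assms by (auto intro!: Hc_hmul Hc_hadd Hc_hsc simp: Hc_zero)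
qed

lemma Hc_sum_bas: "finite S \<Longrightarrow> (\<And>b. b \<in> S \<Longrightarrow> valid n b) \<Longrightarrow> (\<lambda>t. \<Sum>b\<in>S. c b * bas b t) \<in> Hc n"
proof (induction S rule: finite_induct)
  case empty
  then show ?case using Hc_zero by simp
next
  case (insert a S)
  then have "hadd (hsc (c a) (bas a)) (\<lambda>t. \<Sum>b\<in>S. c b * bas b t) \<in> Hc n"
    by (intro Hc_hadd Hc_hsc Hc_bas) auto
  then show ?case
    using insert by (simp add: hadd_def hsc_def)
qed

lemma sum_bas_supp: "finite (supp h) \<Longrightarrow> h = (\<lambda>t. \<Sum>b\<in>supp h. h b * bas b t)"
  by (rule ext) (simp add: bas_apply sum.delta supp_def if_distrib cong: if_cong)

section \<open>The case n = 1\<close>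

text \<open>For n = 1 the algebra H is the Laurent polynomial ring in x, with g = x^w and y = 1 - x^w;
  \<open>xshift a\<close> is multiplication by x^a.\<close>

definition xshift :: "int \<Rightarrow> ('k::field) hel \<Rightarrow> 'k hel" where
  "xshift a f = (\<lambda>(j, a', k). if j = 0 \<and> a' = 0 then f (0, 0, k - a) else 0)"

lemma valid_1_idx: "valid 1 b \<Longrightarrow> b = (0, 0, snd (snd b))"
  by (cases b) (simp add: valid_def)

lemma mb_1: "mb 1 w \<gamma> (0, 0, k) (0, 0, k') = bas (0, 0, k + k')"
  by (simp add: mb_def Let_def mon_def gxi_def)

lemma Ginv_1: "Ginv 1 w = bas (0, 0, - int w)"
  by (simp add: Ginv_def mon_def gxi_def)

lemma Ye_1: "Ye 1 w = (\<lambda>t. oneH t - bas (0, 0, int w) t)"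
  by (simp add: Ye_def mon_def gxi_def)

lemma hmul_1_commute:
  assumes f: "f \<in> Hc 1" and g: "g \<in> Hc 1"
  shows "hmul 1 w \<gamma> f g = hmul 1 w \<gamma> g f"
proof
  fix t
  have mb_comm: "mb 1 w \<gamma> a b = mb 1 w \<gamma> b a" if "a \<in> supp f" "b \<in> supp g" for a b
    using that valid_1_idx[of a] valid_1_idx[of b] Hc_valid[OF f, of a] Hc_valid[OF g, of b]
      mb_1[of w \<gamma> "snd (snd a)" "snd (snd b)"] mb_1[of w \<gamma> "snd (snd b)" "snd (snd a)"]
    by (simp add: supp_def add.commute)
  then have "f a * g b * mb 1 w \<gamma> a b t = g b * f a * mb 1 w \<gamma> b a t"
    if "a \<in> supp f" "b \<in> supp g" for a b
    using mb_comm[OF that] by (simp add: mult.commute)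
  then have "hmul 1 w \<gamma> f g t = (\<Sum>a\<in>supp f. \<Sum>b\<in>supp g. g b * f a * mb 1 w \<gamma> b a t)"
    unfolding hmul_def by (intro sum.cong refl) blast
  also have "\<dots> = hmul 1 w \<gamma> g f t"
    unfolding hmul_def by (rule sum.swap)
  finally show "hmul 1 w \<gamma> f g t = hmul 1 w \<gamma> g f t" .
qed

lemma hmul_1_bas_right:
  assumes f: "f \<in> Hc 1"
  shows "hmul 1 w \<gamma> f (bas (0, 0, a)) = xshift a f"
proof
  fix t :: bidx
  obtain j a' k where t: "t = (j, a', k)" by (cases t)
  have fin: "finite (supp f)"
    using f by (rule Hc_finite_supp)
  have idx: "b = (0, 0, snd (snd b))" if "b \<in> supp f" for b
    using that Hc_valid[OF f, of b] valid_1_idx by (simp add: supp_def)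
  have "hmul 1 w \<gamma> f (bas (0, 0, a)) t = (\<Sum>b\<in>supp f. f b * mb 1 w \<gamma> b (0, 0, a) t)"
    unfolding hmul_def supp_bas by (simp add: bas_apply)
  also have "\<dots> = (\<Sum>b\<in>supp f. if b = (0, 0, k - a) \<and> j = 0 \<and> a' = 0 then f b else 0)"
  proof (rule sum.cong[OF refl])
    fix b assume b: "b \<in> supp f"
    then have "mb 1 w \<gamma> b (0, 0, a) t = bas (0, 0, snd (snd b) + a) t"
      using idx mb_1 by metis
    then show "f b * mb 1 w \<gamma> b (0, 0, a) t = (if b = (0, 0, k - a) \<and> j = 0 \<and> a' = 0 then f b else 0)"
      using idx[OF b] t by (cases b) (auto simp: bas_apply)
  qed
  also have "\<dots> = xshift a f t"
    using fin by (auto simp: sum.delta xshift_def t supp_def)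
  finally show "hmul 1 w \<gamma> f (bas (0, 0, a)) t = xshift a f t" .
qed

lemma Hc_1_xshift: "f \<in> Hc 1 \<Longrightarrow> xshift a f \<in> Hc 1"
  using Hc_hmul[of 1 f "bas (0, 0, a)"] hmul_1_bas_right[of f] Hc_bas'[of 0 1 0 a]
  by simp

lemma cc_1_diag: "cc 1 w \<gamma> \<beta> r i k k = bas (0, 0, r + int w * (i - int k))"
proof (induction k)
  case 0
  show ?case by (simp add: mon_def gxi_def)
next
  case (Suc k)
  have "cc 1 w \<gamma> \<beta> r i (Suc k) (Suc k) = hmul 1 w \<gamma> (cc 1 w \<gamma> \<beta> r i k k) (Ginv 1 w)"
    by simp
  also have "\<dots> = bas (0, 0, r + int w * (i - int k) + - int w)"
    unfolding Suc.IH Ginv_1 hmul_bas_bas mb_1 by simp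
  finally show ?case by (simp add: algebra_simps)
qed

text \<open>Since H is commutative for n = 1, the terms c S(y) and y c S(g) cancel.\<close>

lemma cc_1_cancel:
  "hadd (hmul 1 w \<gamma> (bas (0, 0, c)) (SY 1 w \<gamma>))
        (hmul 1 w \<gamma> (hmul 1 w \<gamma> (Ye 1 w) (bas (0, 0, c))) (Ginv 1 w)) = (\<lambda>_. 0)"
proof -
  have Ye_Hc: "Ye 1 w \<in> Hc 1"
    unfolding Ye_1 oneH_def by (intro Hc_diff Hc_bas') auto
  have SY: "SY 1 w \<gamma> = hsc (-1) (xshift (- int w) (Ye 1 w))"
    unfolding SY_def Ginv_1 hmul_1_bas_right[OF Ye_Hc] ..
  have SY_Hc: "SY 1 w \<gamma> \<in> Hc 1"
    unfolding SY by (intro Hc_hsc Hc_1_xshift Ye_Hc)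
  have bas_Hc: "bas (0, 0, c) \<in> Hc 1"
    by (rule Hc_bas') auto
  show ?thesis
    unfolding hmul_1_commute[OF bas_Hc SY_Hc] hmul_1_bas_right[OF SY_Hc]
      hmul_1_bas_right[OF Ye_Hc] Ginv_1 hmul_1_bas_right[OF Hc_1_xshift[OF Ye_Hc]]
    unfolding SY
    by (rule ext) (auto simp: hadd_def hsc_def xshift_def algebra_simps split: prod.splits)
qed

lemma cc_1_below_diag:
  fixes \<gamma> \<beta> :: "'k::field"
  assumes "\<gamma> = 1" "\<beta> = 1"
  shows "l < k \<Longrightarrow> cc 1 w \<gamma> \<beta> r i k l = (\<lambda>_. 0)"
proof (induction k arbitrary: l)
  case 0
  then show ?case by simp
next
  case (Suc k)
  show ?case
  proof (cases "l = k")
    case True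
    have "0 < k \<Longrightarrow> cc 1 w \<gamma> \<beta> r i k (k - 1) = (\<lambda>_. 0)"
      using Suc.IH by simp
    then have "cc 1 w \<gamma> \<beta> r i (Suc k) k =
        hadd (hmul 1 w \<gamma> (cc 1 w \<gamma> \<beta> r i k k) (SY 1 w \<gamma>))
             (hmul 1 w \<gamma> (hmul 1 w \<gamma> (Ye 1 w) (cc 1 w \<gamma> \<beta> r i k k)) (Ginv 1 w))"
      using assms by (simp add: hadd_def)
    then show ?thesis
      unfolding True cc_1_diag cc_1_cancel .
  next
    case False
    then have "cc 1 w \<gamma> \<beta> r i k l = (\<lambda>_. 0)" "cc 1 w \<gamma> \<beta> r i k (l - 1) = (\<lambda>_. 0)"
      using Suc by simp_all
    then show ?thesis
      using Suc.prems by (cases l) simp_all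
  qed
qed

section \<open>The case n > 1: structure constants\<close>

locale B_n_gt_1 =
  fixes n w :: nat and \<gamma> :: "'k::field"
  assumes n_gt_1: "1 < n"
begin

abbreviation "idx_1 \<equiv> (0::nat, 0::nat, 0::int)"
abbreviation "idx_y \<equiv> (1::nat, 0::nat, 0::int)"
abbreviation "idx_g \<equiv> (0::nat, 1::nat, 0::int)"

lemma n_pos: "0 < n"
  using n_gt_1 by simp

lemma Ye_eq: "(Ye n w :: 'k hel) = bas idx_y"
  using n_gt_1 by (simp add: Ye_def mon_def gxi_def)

lemma Ge_eq: "(Ge n w :: 'k hel) = bas idx_g"
  using n_gt_1 by (simp add: Ge_def mon_def gxi_def)

lemma Xe_eq: "(Xe n w :: 'k hel) = bas (0, 0, 1)"
  using n_gt_1 by (simp add: Xe_def mon_def gxi_def)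

lemma Ye_Hc: "(Ye n w :: 'k hel) \<in> Hc n"
  unfolding Ye_eq using n_gt_1 by (intro Hc_bas') auto

lemma Ge_Hc: "(Ge n w :: 'k hel) \<in> Hc n"
  unfolding Ge_eq using n_gt_1 by (intro Hc_bas') auto

lemma Xe_Hc: "(Xe n w :: 'k hel) \<in> Hc n"
  unfolding Xe_eq using n_gt_1 by (intro Hc_bas') auto

lemma Ginv_Hc: "(Ginv n w :: 'k hel) \<in> Hc n"
  unfolding Ginv_def using n_gt_1 by (intro Hc_mon) auto

lemma oneH_Hc: "(oneH :: 'k hel) \<in> Hc n"
  unfolding oneH_def using n_gt_1 by (intro Hc_bas') auto

lemma SY_Hc: "(SY n w \<gamma> :: 'k hel) \<in> Hc n"
  unfolding SY_def by (intro Hc_hsc Hc_hmul n_pos Ye_Hc Ginv_Hc)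

lemma cc_Hc: "(cc n w \<gamma> \<beta> r i k l :: 'k hel) \<in> Hc n"
  by (rule Hc_cc[OF n_pos Ye_Hc Ginv_Hc SY_Hc])

lemma hmul_gx_Ye:
  "a < n \<Longrightarrow> hmul n w \<gamma> (bas (0, a, k)) (Ye n w) = hsc ((inverse \<gamma>) ^ a) (bas (1, a, k))"
  unfolding Ye_eq hmul_bas_bas using n_gt_1 mb_no_wrap[of 0 1 n a 0 w \<gamma> k 0] by simp

lemma hmul_Ye_gx: "a < n \<Longrightarrow> hmul n w \<gamma> (Ye n w) (bas (0, a, k)) = bas (1, a, k)"
  unfolding Ye_eq hmul_bas_bas using n_gt_1 mb_no_wrap[of 1 0 n 0 a w \<gamma> 0 k] by simp

lemma hmul_Ye_ypow: "j + 1 < n \<Longrightarrow> hmul n w \<gamma> (Ye n w) (bas (j, 0, 0)) = bas (j + 1, 0, 0)"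
  unfolding Ye_eq hmul_bas_bas using mb_no_wrap[of 1 j n 0 0 w \<gamma> 0 0] by simp

lemma hmul_Ye_ypow_last: "hmul n w \<gamma> (Ye n w) (bas (n - 1, 0, 0)) = (\<lambda>t. oneH t - bas (0, 0, int w) t)"
  unfolding Ye_eq hmul_bas_bas using n_gt_1 by (simp add: mb_eq mon_def gxi_def oneH_def)

lemma hmul_ypow_gx: "j < n \<Longrightarrow> a < n \<Longrightarrow> hmul n w \<gamma> (bas (j, 0, 0)) (bas (0, a, k)) = bas (j, a, k)"
  unfolding hmul_bas_bas using mb_no_wrap[of j 0 n 0 a w \<gamma> 0 k] by simp

lemma hmul_gpow_Ge: "a + 1 < n \<Longrightarrow> hmul n w \<gamma> (bas (0, a, 0)) (Ge n w) = bas (0, a + 1, 0)"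
  unfolding Ge_eq hmul_bas_bas using mb_no_wrap[of 0 0 n a 1 w \<gamma> 0 0] by simp

lemma hmul_gpow_last_Ge: "hmul n w \<gamma> (bas (0, n - 1, 0)) (Ge n w) = bas (0, 0, int w)"
  unfolding Ge_eq hmul_bas_bas using n_gt_1 by (simp add: mb_eq mon_def gxi_def)

lemma hmul_gpow_xpow: "a < n \<Longrightarrow> hmul n w \<gamma> (bas (0, a, 0)) (bas (0, 0, k)) = bas (0, a, k)"
  unfolding hmul_bas_bas using mb_no_wrap[of 0 0 n a 0 w \<gamma> 0 k] by simp

lemma hmul_xpow_Xe: "hmul n w \<gamma> (bas (0, 0, k)) (Xe n w) = bas (0, 0, k + 1)"
  unfolding Xe_eq hmul_bas_bas using n_gt_1 mb_no_wrap[of 0 0 n 0 0 w \<gamma> k 1] by simp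

lemma DY_eq:
  "(DY n w :: bidx \<times> bidx \<Rightarrow> 'k) = (\<lambda>q. if q = (idx_y, idx_g) \<or> q = (idx_1, idx_y) then 1 else 0)"
  by (rule ext) (auto simp: DY_def tens_def Ye_eq Ge_eq oneH_def bas_apply split: if_splits)

lemma Delta_bas: "Delta n w \<gamma> (bas b) = Dbas n w \<gamma> (fst b) (fst (snd b)) (snd (snd b))"
  by (rule ext) (simp add: Delta_def bas_apply)

lemma Delta_Ye: "Delta n w \<gamma> (bas idx_y) = (DY n w :: bidx \<times> bidx \<Rightarrow> 'k)"
proof
  fix q :: "bidx \<times> bidx"
  obtain t t' where q: "q = (t, t')" by (cases q)
  have supp_DY: "supp (DY n w :: bidx \<times> bidx \<Rightarrow> 'k) = {(idx_y, idx_g), (idx_1, idx_y)}"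
    by (auto simp: supp_def DY_eq)
  have supp_11: "supp (tens (oneH :: 'k hel) oneH) = {(idx_1, idx_1)}"
    by (auto simp: supp_def tens_def oneH_def bas_apply split: if_splits)
  have mb_1: "j < n \<Longrightarrow> a < n \<Longrightarrow> mb n w \<gamma> (j, a, k) idx_1 = bas (j, a, k)" for j a k
    using mb_no_wrap[of j 0 n a 0 w \<gamma> k 0] by simp
  have "Delta n w \<gamma> (bas idx_y) q = tmul n w \<gamma> (DY n w) (tens oneH oneH) q"
    by (simp add: Delta_bas oneH_def)
  also have "\<dots> = DY n w q"
    unfolding tmul_def q supp_DY supp_11 using n_gt_1
    by (simp add: mb_1 tens_def oneH_def bas_apply DY_eq)
  finally show "Delta n w \<gamma> (bas idx_y) q = DY n w q" .
qed

lemma Delta2_Ye: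
  "(Delta2 n w \<gamma> (Ye n w) :: bidx \<times> bidx \<times> bidx \<Rightarrow> 'k) =
    (\<lambda>q. if q = (idx_y, idx_g, idx_g) \<or> q = (idx_1, idx_y, idx_g) \<or> q = (idx_1, idx_1, idx_y)
         then 1 else 0)"
proof
  fix q :: "bidx \<times> bidx \<times> bidx"
  obtain b1 b2 b3 where q: "q = (b1, b2, b3)" by (cases q)
  have Delta_1: "Delta n w \<gamma> (bas idx_1) (b1, b2) = (if b1 = idx_1 \<and> b2 = idx_1 then (1::'k) else 0)"
    unfolding Delta_bas by (simp add: tens_def bas_apply)
  have "Delta2 n w \<gamma> (Ye n w) q =
      (\<Sum>b\<in>{b. DY n w (b, b3) \<noteq> (0::'k)}. DY n w (b, b3) * Delta n w \<gamma> (bas b) (b1, b2))"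
    unfolding Delta2_def q Ye_eq Delta_Ye by simp
  also have "\<dots> = (if q = (idx_y, idx_g, idx_g) \<or> q = (idx_1, idx_y, idx_g) \<or> q = (idx_1, idx_1, idx_y)
         then 1 else 0)"
  proof -
    consider "b3 = idx_g" | "b3 = idx_y" | "b3 \<noteq> idx_g" "b3 \<noteq> idx_y"
      by blast
    then show ?thesis
    proof cases
      case 1
      then have "{b. DY n w (b, b3) \<noteq> (0::'k)} = {idx_y}"
        by (auto simp: DY_eq)
      then show ?thesis
        using 1 Delta_Ye by (simp add: DY_eq q)
    next
      case 2
      then have "{b. DY n w (b, b3) \<noteq> (0::'k)} = {idx_1}"
        by (auto simp: DY_eq)
      then show ?thesis
        using 2 Delta_1 by (simp add: DY_eq q)
    next
      case 3
      then have no_terms: "{b. DY n w (b, b3) \<noteq> (0::'k)} = {}"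
        by (auto simp: DY_eq)
      show ?thesis
        unfolding no_terms using 3 by (auto simp: q)
    qed
  qed
  finally show "Delta2 n w \<gamma> (Ye n w) q = \<dots>" .
qed

lemma sum_supp_hmul_Ye_bas:
  assumes "h \<in> Hc n"
  shows "(\<Sum>b\<in>supp h. h b * hmul n w \<gamma> (hmul n w \<gamma> (Ye n w) (bas b)) X t)
       = hmul n w \<gamma> (hmul n w \<gamma> (Ye n w) h) X t"
proof -
  have fin: "finite (supp h)"
    using assms by (rule Hc_finite_supp)
  have "hmul n w \<gamma> (Ye n w) h = (\<lambda>s. \<Sum>b\<in>supp h. h b * hmul n w \<gamma> (Ye n w) (bas b) s)"
    by (rule ext) (rule hmul_linear_right[OF fin subset_refl])
  then show ?thesis
    using hmul_sum_left[OF fin, where F = "\<lambda>b. hmul n w \<gamma> (Ye n w) (bas b)" and c = h]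
      Hc_finite_supp[OF Hc_hmul[OF n_pos Ye_Hc Hc_bas]] Hc_valid[OF assms]
    by (simp add: supp_def)
qed

lemma Santi_1: "Santi n w \<gamma> (bas idx_1) = (oneH :: 'k hel)"
  by (rule ext) (simp add: Santi_def bas_apply oneH_def mon_def gxi_def)

lemma Santi_Ge: "Santi n w \<gamma> (bas idx_g) = (Ginv n w :: 'k hel)"
  by (rule ext) (simp add: Santi_def bas_apply Ginv_def)

lemma Santi_Ye: "Santi n w \<gamma> (bas idx_y) = (SY n w \<gamma> :: 'k hel)"
proof -
  have "Santi n w \<gamma> (bas idx_y) = hmul n w \<gamma> oneH (SY n w \<gamma> :: 'k hel)"
    by (rule ext) (simp add: Santi_def bas_apply oneH_def mon_def gxi_def)
  also have "\<dots> = SY n w \<gamma>"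
    by (rule hmul_one_left[OF SY_Hc])
  finally show ?thesis .
qed

end

definition vsc :: "'k::field \<Rightarrow> 'k vec \<Rightarrow> 'k vec" where
  "vsc c f = (\<lambda>m. c * f m)"

interpretation VS: vector_space "vsc :: 'k::field \<Rightarrow> 'k vec \<Rightarrow> 'k vec"
  by unfold_locales (auto simp: vsc_def fun_eq_iff algebra_simps)

lemma zero_vec: "(0 :: 'k::field vec) = (\<lambda>m. 0)"
  by (simp add: zero_fun_def)

lemma plus_vec: "(x + y :: 'k::field vec) = (\<lambda>m. x m + y m)"
  by (simp add: plus_fun_def)

lemma sum_fun_apply: "(\<Sum>x\<in>A. f x) m = (\<Sum>x\<in>A. (f x :: 'a \<Rightarrow> 'b::comm_monoid_add) m)"
  by (induction A rule: infinite_finite_induct) auto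

lemma span_sum:
  assumes "finite S" "\<And>b. b \<in> S \<Longrightarrow> f b \<in> VS.span X"
  shows "(\<lambda>m. \<Sum>b\<in>S. (c b :: 'k::field) * f b m) \<in> VS.span X"
  using assms
proof (induction S rule: finite_induct)
  case empty
  then show ?case using VS.span_zero[of X] by (simp add: zero_vec)
next
  case (insert a S)
  have "vsc (c a) (f a) + (\<lambda>m. \<Sum>b\<in>S. c b * f b m) \<in> VS.span X"
    using insert by (intro VS.span_add VS.span_scale) auto
  moreover have "vsc (c a) (f a) + (\<lambda>m. \<Sum>b\<in>S. c b * f b m) = (\<lambda>m. \<Sum>b\<in>insert a S. c b * f b m)"
    using insert by (simp add: vsc_def plus_vec)
  ultimately show ?case
    by simp
qed

lemma span_closed_under:
  assumes "\<And>x. x \<in> X \<Longrightarrow> F x \<in> VS.span X"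
    and "F (\<lambda>_. 0) = (\<lambda>_. 0)"
    and "\<And>c x y. x \<in> X \<Longrightarrow> y \<in> VS.span X \<Longrightarrow> F (\<lambda>m. c * x m + y m) = (\<lambda>m. c * F x m + F y m)"
    and "y \<in> VS.span X"
  shows "F y \<in> VS.span X"
proof -
  have "y \<in> VS.span X \<and> F y \<in> VS.span X"
    using assms(4)
  proof (induction rule: VS.span_induct_alt)
    case base
    then show ?case using assms(2) VS.span_zero by (simp add: zero_vec)
  next
    case (step c x y)
    then have x: "x \<in> X" and y: "y \<in> VS.span X" and Fy: "F y \<in> VS.span X"
      by blast+
    have "vsc c x + y \<in> VS.span X"
      using VS.span_base[OF x] y by (intro VS.span_add VS.span_scale)
    moreover have "F (vsc c x + y) = vsc c (F x) + F y"
      using assms(3)[OF x y] by (simp add: vsc_def plus_vec)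
    moreover have "vsc c (F x) + F y \<in> VS.span X"
      using assms(1)[OF x] Fy by (intro VS.span_add VS.span_scale)
    ultimately show ?case
      by metis
  qed
  then show ?thesis ..
qed

lemma Vc_zero: "(\<lambda>_. 0) \<in> Vc p"
  by (simp add: Vc_def)

lemma Vc_scale: "x \<in> Vc p \<Longrightarrow> (\<lambda>m. c * x m) \<in> Vc p"
  by (simp add: Vc_def)

lemma Vc_sum: "(\<And>l. l \<in> L \<Longrightarrow> f l \<in> Vc p) \<Longrightarrow> (\<lambda>m. \<Sum>l\<in>L. c l * f l m) \<in> Vc p"
  by (simp add: Vc_def)

locale yd_module = B_n_gt_1 n w \<gamma> for n w :: nat and \<gamma> :: "'k::field" +
  fixes p :: nat and act :: "'k hel \<Rightarrow> 'k vec \<Rightarrow> 'k vec" and co :: "'k vec \<Rightarrow> bidx \<Rightarrow> 'k vec"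
  assumes YD: "is_YD n w \<gamma> p act co"
begin

lemma act_Vc: "h \<in> Hc n \<Longrightarrow> x \<in> Vc p \<Longrightarrow> act h x \<in> Vc p"
  using YD unfolding is_YD_def by (simp del: split_paired_All)

lemma act_add:
  "h \<in> Hc n \<Longrightarrow> x \<in> Vc p \<Longrightarrow> y \<in> Vc p \<Longrightarrow> act h (\<lambda>m. x m + y m) = (\<lambda>m. act h x m + act h y m)"
  using YD unfolding is_YD_def by (simp del: split_paired_All)

lemma act_scale: "h \<in> Hc n \<Longrightarrow> x \<in> Vc p \<Longrightarrow> act h (\<lambda>m. c * x m) = (\<lambda>m. c * act h x m)"
  using YD unfolding is_YD_def by (simp del: split_paired_All)

lemma act_hadd:
  "h \<in> Hc n \<Longrightarrow> h' \<in> Hc n \<Longrightarrow> x \<in> Vc p \<Longrightarrow> act (hadd h h') x = (\<lambda>m. act h x m + act h' x m)"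
  using YD unfolding is_YD_def by (simp del: split_paired_All)

lemma act_hsc: "h \<in> Hc n \<Longrightarrow> x \<in> Vc p \<Longrightarrow> act (hsc c h) x = (\<lambda>m. c * act h x m)"
  using YD unfolding is_YD_def by (simp del: split_paired_All)

lemma act_one: "x \<in> Vc p \<Longrightarrow> act oneH x = x"
  using YD unfolding is_YD_def by (simp del: split_paired_All)

lemma act_hmul: "h \<in> Hc n \<Longrightarrow> h' \<in> Hc n \<Longrightarrow> x \<in> Vc p \<Longrightarrow> act (hmul n w \<gamma> h h') x = act h (act h' x)"
  using YD unfolding is_YD_def by (simp del: split_paired_All)

lemma co_props:
  "x \<in> Vc p \<Longrightarrow> finite (suppV (co x)) \<and> (\<forall>b. co x b \<in> Vc p) \<and> (\<forall>b. co x b \<noteq> (\<lambda>_. 0) \<longrightarrow> valid n b)"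
  using YD unfolding is_YD_def by (simp del: split_paired_All)

lemma co_finite: "x \<in> Vc p \<Longrightarrow> finite (suppV (co x))"
  using co_props by blast

lemma co_Vc: "x \<in> Vc p \<Longrightarrow> co x b \<in> Vc p"
  using co_props by blast

lemma co_valid: "x \<in> Vc p \<Longrightarrow> co x b \<noteq> (\<lambda>_. 0) \<Longrightarrow> valid n b"
  using co_props by blast

lemma co_add: "x \<in> Vc p \<Longrightarrow> y \<in> Vc p \<Longrightarrow> co (\<lambda>m. x m + y m) b = (\<lambda>m. co x b m + co y b m)"
  using YD unfolding is_YD_def by (simp del: split_paired_All)

lemma co_scale: "x \<in> Vc p \<Longrightarrow> co (\<lambda>m. c * x m) b = (\<lambda>m. c * co x b m)"
  using YD unfolding is_YD_def by (simp del: split_paired_All)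

lemma co_act:
  "h \<in> Hc n \<Longrightarrow> x \<in> Vc p \<Longrightarrow> co (act h x) t =
     (\<lambda>m. \<Sum>q\<in>supp (Delta2 n w \<gamma> h). \<Sum>b\<in>suppV (co x).
        Delta2 n w \<gamma> h q
        * hmul n w \<gamma> (hmul n w \<gamma> (bas (fst q)) (bas b)) (Santi n w \<gamma> (bas (snd (snd q)))) t
        * act (bas (fst (snd q))) (co x b) m)"
  using YD unfolding is_YD_def by (simp del: split_paired_All)

lemma act_zero: "h \<in> Hc n \<Longrightarrow> act h (\<lambda>_. 0) = (\<lambda>_. 0)"
  using act_scale[of h "\<lambda>_. 0" 0] by (simp add: Vc_zero)

lemma co_zero: "co (\<lambda>_. 0) b = (\<lambda>_. 0)"
  using co_scale[of "\<lambda>_. 0" 0 b] by (simp add: Vc_zero)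

lemma act_sum:
  assumes h: "h \<in> Hc n" and L: "finite L" and f: "\<And>l. l \<in> L \<Longrightarrow> f l \<in> Vc p"
  shows "act h (\<lambda>m. \<Sum>l\<in>L. c l * f l m) = (\<lambda>m. \<Sum>l\<in>L. c l * act h (f l) m)"
  using L f
proof (induction L rule: finite_induct)
  case empty
  then show ?case using act_zero[OF h] by simp
next
  case (insert x F)
  have "act h (\<lambda>m. \<Sum>l\<in>insert x F. c l * f l m) = act h (\<lambda>m. c x * f x m + (\<Sum>l\<in>F. c l * f l m))"
    using insert by simp
  also have "\<dots> = (\<lambda>m. act h (\<lambda>m. c x * f x m) m + act h (\<lambda>m. \<Sum>l\<in>F. c l * f l m) m)"
    using insert by (intro act_add h Vc_scale Vc_sum) auto
  also have "\<dots> = (\<lambda>m. \<Sum>l\<in>insert x F. c l * act h (f l) m)"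
    using insert by (simp add: act_scale[OF h])
  finally show ?case .
qed

lemma act_sum_bas:
  assumes x: "x \<in> Vc p"
  shows "finite S \<Longrightarrow> (\<And>b. b \<in> S \<Longrightarrow> valid n b) \<Longrightarrow>
    act (\<lambda>t. \<Sum>b\<in>S. c b * bas b t) x = (\<lambda>m. \<Sum>b\<in>S. c b * act (bas b) x m)"
proof (induction S rule: finite_induct)
  case empty
  have "act (hsc 0 oneH) x = (\<lambda>m. 0)"
    using act_hsc[OF oneH_Hc x] by simp
  then show ?case by (simp add: hsc_def)
next
  case (insert a S)
  have "(\<lambda>t. \<Sum>b\<in>insert a S. c b * bas b t) = hadd (hsc (c a) (bas a)) (\<lambda>t. \<Sum>b\<in>S. c b * bas b t)"
    using insert by (simp add: hadd_def hsc_def)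
  moreover have "act (hadd (hsc (c a) (bas a)) (\<lambda>t. \<Sum>b\<in>S. c b * bas b t)) x
      = (\<lambda>m. c a * act (bas a) x m + act (\<lambda>t. \<Sum>b\<in>S. c b * bas b t) x m)"
    using insert act_hadd[OF Hc_hsc[OF Hc_bas] Hc_sum_bas x] act_hsc[OF Hc_bas x] by simp
  ultimately show ?case
    using insert by simp
qed

lemma act_eq_sum_bas:
  assumes h: "h \<in> Hc n" and x: "x \<in> Vc p"
  shows "act h x = (\<lambda>m. \<Sum>b\<in>supp h. h b * act (bas b) x m)"
  using act_sum_bas[OF x Hc_finite_supp[OF h], of h] sum_bas_supp[OF Hc_finite_supp[OF h]] Hc_valid[OF h]
  by (simp add: supp_def)

text \<open>The Yetter-Drinfeld condition for h = y, whose double coproduct is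
  y \<otimes> g \<otimes> g + 1 \<otimes> y \<otimes> g + 1 \<otimes> 1 \<otimes> y.\<close>

lemma co_act_Ye:
  assumes x: "x \<in> Vc p"
  shows "co (act (Ye n w) x) t = (\<lambda>m. \<Sum>b\<in>suppV (co x).
        hmul n w \<gamma> (hmul n w \<gamma> (Ye n w) (bas b)) (Ginv n w) t * act (Ge n w) (co x b) m
      + hmul n w \<gamma> (bas b) (Ginv n w) t * act (Ye n w) (co x b) m
      + hmul n w \<gamma> (bas b) (SY n w \<gamma>) t * co x b m)" (is "_ = ?rhs")
proof -
  have supp_3: "supp (\<lambda>q. if q = a \<or> q = b \<or> q = c then (1::'k) else 0) = {a, b, c}" for a b c
    by (auto simp: supp_def)
  have one_bas: "hmul n w \<gamma> oneH (bas b) = bas b" if "b \<in> suppV (co x)" for b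
    using that co_valid[OF x] by (intro hmul_one_left Hc_bas) (simp add: suppV_def)
  have "co (act (Ye n w) x) t = (\<lambda>m. \<Sum>b\<in>suppV (co x).
        hmul n w \<gamma> (hmul n w \<gamma> (Ye n w) (bas b)) (Ginv n w) t * act (Ge n w) (co x b) m
      + hmul n w \<gamma> (hmul n w \<gamma> oneH (bas b)) (Ginv n w) t * act (Ye n w) (co x b) m
      + hmul n w \<gamma> (hmul n w \<gamma> oneH (bas b)) (SY n w \<gamma>) t * act oneH (co x b) m)"
    unfolding co_act[OF Ye_Hc x] Delta2_Ye supp_3
    by (simp add: sum.distrib Santi_Ge[simplified] Santi_Ye[simplified] Santi_1[simplified]
        Ye_eq Ge_eq oneH_def[symmetric] add.assoc)
  also have "\<dots> = ?rhs"
    by (intro ext sum.cong refl) (simp add: one_bas act_one[OF co_Vc[OF x]])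
  finally show ?thesis .
qed

lemma sum_coaction_regroup:
  fixes k :: nat
  assumes x: "x \<in> Vc p" and a: "a \<in> Hc n"
    and co_x: "\<And>b. co x b = (\<lambda>m. \<Sum>l\<le>k. h l b * z l m)"
    and h: "\<And>l. h l \<in> Hc n" and z: "\<And>l. z l \<in> Vc p"
  shows "(\<Sum>b\<in>suppV (co x). T b * act a (co x b) m)
       = (\<Sum>l\<le>k. (\<Sum>b\<in>supp (h l). h l b * T b) * act a (z l) m)"
proof -
  define B where "B = suppV (co x) \<union> (\<Union>l\<le>k. supp (h l))"
  have finB: "finite B"
    unfolding B_def using co_finite[OF x] Hc_finite_supp[OF h] by (intro finite_UnI finite_UN_I) auto
  have "(\<Sum>b\<in>suppV (co x). T b * act a (co x b) m) = (\<Sum>b\<in>B. T b * act a (co x b) m)"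
    by (rule sum.mono_neutral_left[OF finB]) (auto simp: B_def suppV_def act_zero[OF a])
  also have "\<dots> = (\<Sum>b\<in>B. \<Sum>l\<le>k. h l b * T b * act a (z l) m)"
    by (simp add: co_x act_sum[OF a finite_atMost z] sum_distrib_left mult_ac)
  also have "\<dots> = (\<Sum>l\<le>k. \<Sum>b\<in>B. h l b * T b * act a (z l) m)"
    by (rule sum.swap)
  also have "\<dots> = (\<Sum>l\<le>k. (\<Sum>b\<in>supp (h l). h l b * T b) * act a (z l) m)"
  proof (rule sum.cong[OF refl])
    fix l assume "l \<in> {..k}"
    then have "(\<Sum>b\<in>B. h l b * T b * act a (z l) m) = (\<Sum>b\<in>supp (h l). h l b * T b * act a (z l) m)"
      by (intro sum.mono_neutral_right[OF finB]) (auto simp: B_def supp_def)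
    then show "(\<Sum>b\<in>B. h l b * T b * act a (z l) m) = (\<Sum>b\<in>supp (h l). h l b * T b) * act a (z l) m"
      by (simp add: sum_distrib_right)
  qed
  finally show ?thesis .
qed

end

section \<open>The y-string of a standard element\<close>

lemma sum_atMost_Suc_recombine:
  fixes A P U :: "nat \<Rightarrow> 'a::comm_semiring_1"
  shows "(\<Sum>l\<le>Suc k. ((if l \<le> k then A l else 0) + (if 0 < l then P (l - 1) else 0)) * U l)
       = (\<Sum>l\<le>k. A l * U l + P l * U (Suc l))"
proof -
  have "(\<Sum>l\<le>Suc k. (if l \<le> k then A l else 0) * U l) = (\<Sum>l\<le>k. A l * U l)"
    by (simp add: sum.atMost_Suc)
  moreover have "(\<Sum>l\<le>Suc k. (if 0 < l then P (l - 1) else 0) * U l) = (\<Sum>l\<le>k. P l * U (Suc l))"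
    by (subst sum.atMost_Suc_shift) simp
  ultimately show ?thesis
    by (simp add: distrib_right sum.distrib)
qed

locale standard_element = yd_module n w \<gamma> p act co
  for n w :: nat and \<gamma> :: "'k::field" and p act co +
  fixes v :: "'k vec" and \<alpha> \<beta> :: 'k and r i :: int
  assumes std: "standard n w p act co v \<alpha> \<beta> r i"
    and beta_n: "\<beta> ^ n = 1"
    and gamma_n: "\<gamma> ^ n = 1"
    and gamma_primitive: "\<forall>m. 0 < m \<and> m < n \<longrightarrow> \<gamma> ^ m \<noteq> 1"
begin

lemma v_Vc: "v \<in> Vc p"
  and v_nonzero: "v \<noteq> (\<lambda>_. 0)"
  and alpha_nonzero: "\<alpha> \<noteq> 0"
  and beta_nonzero: "\<beta> \<noteq> 0"
  and act_Xe_v: "act (Xe n w) v = (\<lambda>m. \<alpha> * v m)"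
  and act_Ge_v: "act (Ge n w) v = (\<lambda>m. \<beta> * v m)"
  and co_v: "co v = (\<lambda>b. if b = (0, fst (gxi n w i r), snd (gxi n w i r)) then v else (\<lambda>_. 0))"
  using std unfolding standard_def by blast+

lemma gamma_nonzero: "\<gamma> \<noteq> 0"
  using gamma_n n_pos by (auto simp: power_0_left)

definition yv :: "nat \<Rightarrow> 'k vec" where
  "yv l = (act (Ye n w) ^^ l) v"

lemma yv_0: "yv 0 = v"
  by (simp add: yv_def)

lemma yv_Suc: "yv (Suc l) = act (Ye n w) (yv l)"
  by (simp add: yv_def)

lemma yv_Vc: "yv l \<in> Vc p"
  by (induction l) (simp_all add: yv_0 yv_Suc v_Vc act_Vc Ye_Hc)

lemma act_xpow_v: "\<exists>c. act (bas (0, 0, k)) v = (\<lambda>m. c * v m)"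
proof (induction k rule: int_induct[where k = 0])
  case base
  show ?case using act_one[OF v_Vc] by (intro exI[of _ 1]) (simp add: oneH_def)
next
  case (step1 k)
  then obtain c where c: "act (bas (0, 0, k)) v = (\<lambda>m. c * v m)" by blast
  have "act (bas (0, 0, k + 1)) v = act (bas (0, 0, k)) (act (Xe n w) v)"
    using hmul_xpow_Xe[of k] act_hmul[OF Hc_bas' Xe_Hc v_Vc, of 0 0 k] n_pos by simp
  also have "\<dots> = (\<lambda>m. (\<alpha> * c) * v m)"
    unfolding act_Xe_v using act_scale[OF Hc_bas' v_Vc, of 0 0 k] n_pos c by (simp add: mult.assoc)
  finally show ?case by blast
next
  case (step2 k)
  then obtain c where c: "act (bas (0, 0, k)) v = (\<lambda>m. c * v m)" by blast
  have "act (bas (0, 0, k)) v = act (bas (0, 0, k - 1)) (act (Xe n w) v)"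
    using hmul_xpow_Xe[of "k - 1"] act_hmul[OF Hc_bas' Xe_Hc v_Vc, of 0 0 "k - 1"] n_pos by simp
  also have "\<dots> = (\<lambda>m. \<alpha> * act (bas (0, 0, k - 1)) v m)"
    unfolding act_Xe_v using act_scale[OF Hc_bas' v_Vc, of 0 0 "k - 1"] n_pos by simp
  finally have "act (bas (0, 0, k - 1)) v = (\<lambda>m. (inverse \<alpha> * c) * v m)"
    using c alpha_nonzero by (auto simp: fun_eq_iff field_simps)
  then show ?case by blast
qed

lemma act_gpow_v: "a < n \<Longrightarrow> act (bas (0, a, 0)) v = (\<lambda>m. \<beta> ^ a * v m)"
proof (induction a)
  case 0
  then show ?case using act_one[OF v_Vc] by (simp add: oneH_def)
next
  case (Suc a)
  have "act (bas (0, Suc a, 0)) v = act (bas (0, a, 0)) (act (Ge n w) v)"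
    using hmul_gpow_Ge[of a] act_hmul[OF Hc_bas' Ge_Hc v_Vc, of 0 a 0] Suc by simp
  also have "\<dots> = (\<lambda>m. \<beta> ^ Suc a * v m)"
    unfolding act_Ge_v using act_scale[OF Hc_bas' v_Vc, of 0 a 0] Suc by (simp add: mult_ac)
  finally show ?case .
qed

lemma act_xw_v: "act (bas (0, 0, int w)) v = v"
proof -
  have "act (bas (0, 0, int w)) v = act (bas (0, n - 1, 0)) (act (Ge n w) v)"
    using hmul_gpow_last_Ge act_hmul[OF Hc_bas' Ge_Hc v_Vc, of 0 "n - 1" 0] n_gt_1 by simp
  also have "\<dots> = (\<lambda>m. \<beta> * (\<beta> ^ (n - 1) * v m))"
    unfolding act_Ge_v using act_scale[OF Hc_bas' v_Vc, of 0 "n - 1" 0 \<beta>] act_gpow_v[of "n - 1"] n_gt_1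
    by simp
  finally show ?thesis
    using beta_n n_pos by (simp add: mult.assoc[symmetric] power_eq_if[of \<beta> n])
qed

lemma act_gx_v: "a < n \<Longrightarrow> \<exists>c. act (bas (0, a, k)) v = (\<lambda>m. c * v m)"
proof -
  assume a: "a < n"
  obtain c where c: "act (bas (0, 0, k)) v = (\<lambda>m. c * v m)"
    using act_xpow_v by blast
  have "act (bas (0, a, k)) v = act (bas (0, a, 0)) (act (bas (0, 0, k)) v)"
    using hmul_gpow_xpow[OF a, of k] act_hmul[OF Hc_bas' Hc_bas' v_Vc, of 0 a 0 0 0 k] a n_pos by simp
  also have "\<dots> = (\<lambda>m. (c * \<beta> ^ a) * v m)"
    unfolding c using act_scale[OF Hc_bas' v_Vc, of 0 a 0] act_gpow_v[OF a] a n_pos by (simp add: mult_ac)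
  finally show ?thesis by blast
qed

lemma act_gx_yv:
  assumes a: "a < n" and c: "act (bas (0, a, k)) v = (\<lambda>m. c * v m)"
  shows "act (bas (0, a, k)) (yv l) = (\<lambda>m. (inverse \<gamma> ^ (a * l) * c) * yv l m)"
proof (induction l)
  case 0
  then show ?case using c by (simp add: yv_0)
next
  case (Suc l)
  have B: "bas (0, a, k) \<in> Hc n" and B1: "bas (1, a, k) \<in> Hc n"
    using a n_gt_1 by (simp_all add: Hc_bas')
  have "act (bas (0, a, k)) (yv (Suc l)) = act (hmul n w \<gamma> (bas (0, a, k)) (Ye n w)) (yv l)"
    unfolding yv_Suc using act_hmul[OF B Ye_Hc yv_Vc] by simp
  also have "\<dots> = (\<lambda>m. inverse \<gamma> ^ a * act (bas (1, a, k)) (yv l) m)"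
    unfolding hmul_gx_Ye[OF a] by (rule act_hsc[OF B1 yv_Vc])
  also have "act (bas (1, a, k)) (yv l) = act (Ye n w) (act (bas (0, a, k)) (yv l))"
    unfolding hmul_Ye_gx[OF a, symmetric] by (rule act_hmul[OF Ye_Hc B yv_Vc])
  also have "\<dots> = (\<lambda>m. (inverse \<gamma> ^ (a * l) * c) * yv (Suc l) m)"
    unfolding Suc yv_Suc by (rule act_scale[OF Ye_Hc yv_Vc])
  finally show ?case
    by (simp add: power_add mult_ac)
qed

lemma act_ypow_yv: "j < n \<Longrightarrow> act (bas (j, 0, 0)) (yv l) = yv (l + j)"
proof (induction j)
  case 0
  then show ?case using act_one[OF yv_Vc] by (simp add: oneH_def)
next
  case (Suc j)
  have "act (bas (Suc j, 0, 0)) (yv l) = act (Ye n w) (act (bas (j, 0, 0)) (yv l))"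
    using hmul_Ye_ypow[of j] act_hmul[OF Ye_Hc Hc_bas' yv_Vc, of j 0 0 l] Suc by simp
  then show ?case
    using Suc by (simp add: yv_Suc)
qed

lemma yv_n: "yv n = (\<lambda>_. 0)"
proof -
  have "yv n = act (Ye n w) (yv (n - 1))"
    using n_gt_1 yv_Suc[of "n - 1"] by simp
  also have "yv (n - 1) = act (bas (n - 1, 0, 0)) v"
    using act_ypow_yv[of "n - 1" 0] n_gt_1 by (simp add: yv_0)
  also have "act (Ye n w) (act (bas (n - 1, 0, 0)) v) = act (\<lambda>t. oneH t - bas (0, 0, int w) t) v"
    using act_hmul[OF Ye_Hc Hc_bas' v_Vc, of "n - 1" 0 0] n_gt_1 hmul_Ye_ypow_last by simp
  also have "(\<lambda>t. oneH t - bas (0, 0, int w) t) = hadd oneH (hsc (-1) (bas (0, 0, int w)))"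
    by (simp add: hadd_def hsc_def fun_eq_iff)
  also have "act \<dots> v = (\<lambda>m. act oneH v m + (-1) * act (bas (0, 0, int w)) v m)"
    using act_hadd[OF oneH_Hc Hc_hsc[OF Hc_bas'] v_Vc] act_hsc[OF Hc_bas' v_Vc] n_pos by simp
  also have "\<dots> = (\<lambda>_. 0)"
    using act_one[OF v_Vc] act_xw_v by simp
  finally show ?thesis .
qed

lemma act_Ge_yv: "act (Ge n w) (yv l) = (\<lambda>m. (\<beta> * inverse \<gamma> ^ l) * yv l m)"
  using act_gx_yv[of 1 0 \<beta> l] act_gpow_v[of 1] n_gt_1 Ge_eq by (simp add: mult.commute)

lemma act_bas_yv: "valid n b \<Longrightarrow> \<exists>c. act (bas b) (yv l) = (\<lambda>m. c * yv (l + fst b) m)"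
proof -
  assume "valid n b"
  then obtain j a k where b: "b = (j, a, k)" and j: "j < n" and a: "a < n"
    by (cases b) (auto simp: valid_def)
  obtain c where c: "act (bas (0, a, k)) v = (\<lambda>m. c * v m)"
    using act_gx_v[OF a] by blast
  have "act (bas b) (yv l) = act (bas (j, 0, 0)) (act (bas (0, a, k)) (yv l))"
    unfolding b hmul_ypow_gx[OF j a, of k, symmetric] using j a
    by (intro act_hmul Hc_bas' yv_Vc) simp_all
  also have "\<dots> = (\<lambda>m. (inverse \<gamma> ^ (a * l) * c) * yv (l + j) m)"
    unfolding act_gx_yv[OF a c] using act_scale[OF Hc_bas' yv_Vc, of j 0 0] act_ypow_yv[OF j] j n_pos
    by simp
  finally show ?thesis
    using b by auto
qed

abbreviation C :: "nat \<Rightarrow> nat \<Rightarrow> 'k hel" where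
  "C k l \<equiv> cc n w \<gamma> \<beta> r i k l"

lemma C_Suc_apply:
  assumes "l \<le> Suc k"
  shows "C (Suc k) l t =
     (if l \<le> k then \<beta> * inverse \<gamma> ^ l * hmul n w \<gamma> (hmul n w \<gamma> (Ye n w) (C k l)) (Ginv n w) t
                    + hmul n w \<gamma> (C k l) (SY n w \<gamma>) t else 0)
     + (if 0 < l then hmul n w \<gamma> (C k (l - 1)) (Ginv n w) t else 0)"
  using assms by (auto simp: hadd_def hsc_def not_less_eq_eq)

lemma co_yv_Suc:
  assumes IH: "\<And>b. co (yv k) b = (\<lambda>m. \<Sum>l\<le>k. C k l b * yv l m)"
  shows "co (yv (Suc k)) t m =
    (\<Sum>l\<le>k. hmul n w \<gamma> (hmul n w \<gamma> (Ye n w) (C k l)) (Ginv n w) t * (\<beta> * inverse \<gamma> ^ l * yv l m)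
          + hmul n w \<gamma> (C k l) (Ginv n w) t * yv (Suc l) m
          + hmul n w \<gamma> (C k l) (SY n w \<gamma>) t * yv l m)"
proof -
  let ?S = "suppV (co (yv k))"
  have hmul_C: "(\<Sum>b\<in>supp (C k l). C k l b * hmul n w \<gamma> (bas b) X t) = hmul n w \<gamma> (C k l) X t"
    for l X
    by (rule hmul_linear_left[OF Hc_finite_supp[OF cc_Hc] subset_refl, symmetric])
  note regroup = sum_coaction_regroup[OF yv_Vc _ IH cc_Hc yv_Vc]
  have "co (yv (Suc k)) t m =
      (\<Sum>b\<in>?S. hmul n w \<gamma> (hmul n w \<gamma> (Ye n w) (bas b)) (Ginv n w) t * act (Ge n w) (co (yv k) b) m)
    + (\<Sum>b\<in>?S. hmul n w \<gamma> (bas b) (Ginv n w) t * act (Ye n w) (co (yv k) b) m)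
    + (\<Sum>b\<in>?S. hmul n w \<gamma> (bas b) (SY n w \<gamma>) t * act oneH (co (yv k) b) m)"
    unfolding yv_Suc co_act_Ye[OF yv_Vc] by (simp add: sum.distrib act_one[OF co_Vc[OF yv_Vc]])
  also have "\<dots> =
      (\<Sum>l\<le>k. hmul n w \<gamma> (hmul n w \<gamma> (Ye n w) (C k l)) (Ginv n w) t * (\<beta> * inverse \<gamma> ^ l * yv l m))
    + (\<Sum>l\<le>k. hmul n w \<gamma> (C k l) (Ginv n w) t * yv (Suc l) m)
    + (\<Sum>l\<le>k. hmul n w \<gamma> (C k l) (SY n w \<gamma>) t * yv l m)"
    unfolding regroup[OF Ge_Hc] regroup[OF Ye_Hc] regroup[OF oneH_Hc]
    by (simp add: sum_supp_hmul_Ye_bas[OF cc_Hc] hmul_C act_Ge_yv act_one[OF yv_Vc] yv_Suc)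
  finally show ?thesis
    by (simp add: sum.distrib)
qed

lemma co_yv: "co (yv k) b = (\<lambda>m. \<Sum>l\<le>k. C k l b * yv l m)"
proof (induction k arbitrary: b)
  case 0
  show ?case by (rule ext) (simp add: co_v yv_0 mon_def bas_apply)
next
  case (Suc k)
  define P1 where "P1 l = hmul n w \<gamma> (hmul n w \<gamma> (Ye n w) (C k l)) (Ginv n w) b" for l
  define P2 where "P2 l = hmul n w \<gamma> (C k l) (Ginv n w) b" for l
  define P3 where "P3 l = hmul n w \<gamma> (C k l) (SY n w \<gamma>) b" for l
  show ?case
  proof
    fix m
    have "(\<Sum>l\<le>Suc k. C (Suc k) l b * yv l m) = (\<Sum>l\<le>Suc k.
        ((if l \<le> k then \<beta> * inverse \<gamma> ^ l * P1 l + P3 l else 0) + (if 0 < l then P2 (l - 1) else 0)) * yv l m)"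
      by (rule sum.cong[OF refl]) (simp only: atMost_iff C_Suc_apply P1_def P2_def P3_def)
    also have "\<dots> = (\<Sum>l\<le>k. (\<beta> * inverse \<gamma> ^ l * P1 l + P3 l) * yv l m + P2 l * yv (Suc l) m)"
      by (rule sum_atMost_Suc_recombine)
    also have "\<dots> = co (yv (Suc k)) b m"
      unfolding co_yv_Suc[OF Suc.IH] P1_def P2_def P3_def by (simp add: algebra_simps)
    finally show "co (yv (Suc k)) b m = (\<Sum>l\<le>Suc k. C (Suc k) l b * yv l m)" ..
  qed
qed

lemma eigenvalue_inj:
  assumes "l < n" "l' < n" "\<beta> * inverse \<gamma> ^ l = \<beta> * inverse \<gamma> ^ l'"
  shows "l = l'"
proof -
  have eq: "\<gamma> ^ l = \<gamma> ^ l'"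
    using assms(3) beta_nonzero gamma_nonzero by (simp add: power_inverse)
  have period: "\<gamma> ^ (b - a) = 1" if "a < b" "\<gamma> ^ a = \<gamma> ^ b" for a b
  proof -
    have "\<gamma> ^ b = \<gamma> ^ a * \<gamma> ^ (b - a)"
      using that by (metis le_add_diff_inverse less_imp_le power_add)
    then show ?thesis
      using that gamma_nonzero by simp
  qed
  show ?thesis
  proof (rule ccontr)
    assume "l \<noteq> l'"
    then consider "l < l'" | "l' < l"
      by linarith
    then show False
    proof cases
      case 1
      then show False using period[OF 1 eq] gamma_primitive assms(2) by auto
    next
      case 2
      then show False using period[OF 2 eq[symmetric]] gamma_primitive assms(1) by auto
    qed
  qed
qed

lemma yv_lin_indep:
  assumes "finite L" "L \<subseteq> {..<n}" "\<And>l. l \<in> L \<Longrightarrow> yv l \<noteq> (\<lambda>_. 0)"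
    and "\<And>m. (\<Sum>l\<in>L. c l * yv l m) = 0"
  shows "\<forall>l\<in>L. c l = 0"
  using assms
proof (induction L arbitrary: c rule: finite_induct)
  case empty
  then show ?case by simp
next
  case (insert x F)
  define eig where "eig l = \<beta> * inverse \<gamma> ^ l" for l
  have "act (Ge n w) (\<lambda>m. \<Sum>l\<in>insert x F. c l * yv l m) = (\<lambda>m. \<Sum>l\<in>insert x F. c l * (eig l * yv l m))"
    unfolding act_sum[OF Ge_Hc finite.insertI[OF insert.hyps(1)] yv_Vc] act_Ge_yv eig_def ..
  moreover have "(\<lambda>m. \<Sum>l\<in>insert x F. c l * yv l m) = (\<lambda>_. 0)"
    using insert.prems by simp
  ultimately have Ge_sum: "(\<Sum>l\<in>insert x F. c l * (eig l * yv l m)) = 0" for m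
    using act_zero[OF Ge_Hc] by metis
  have "(\<Sum>l\<in>F. (c l * (eig l - eig x)) * yv l m) =
      (\<Sum>l\<in>insert x F. c l * (eig l * yv l m)) - eig x * (\<Sum>l\<in>insert x F. c l * yv l m)" for m
    using insert.hyps by (simp add: sum_distrib_left sum_subtractf[symmetric] algebra_simps)
  then have "\<forall>l\<in>F. c l * (eig l - eig x) = 0"
    using insert.IH[of "\<lambda>l. c l * (eig l - eig x)"] insert.prems Ge_sum by auto
  moreover have "eig l \<noteq> eig x" if "l \<in> F" for l
    using eigenvalue_inj[of l x] that insert.hyps(2) insert.prems(1) unfolding eig_def by auto
  ultimately have cF: "\<forall>l\<in>F. c l = 0"
    by auto
  then have "c x * yv x m = 0" for m
    using insert.prems(3)[of m] insert.hyps by simp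
  then have "c x = 0"
    using insert.prems(2)[of x] by (auto simp: fun_eq_iff)
  then show ?case
    using cF by simp
qed

lemma yv_zero_from: "yv k = (\<lambda>_. 0) \<Longrightarrow> k \<le> l \<Longrightarrow> yv l = (\<lambda>_. 0)"
proof (induction l)
  case 0
  then show ?case by simp
next
  case (Suc l)
  then show ?case
    by (cases "k = Suc l") (auto simp: yv_Suc act_zero[OF Ye_Hc])
qed

definition yv_len :: nat where
  "yv_len = (LEAST l. yv l = (\<lambda>_. 0))"

lemma yv_len_zero: "yv yv_len = (\<lambda>_. 0)"
  unfolding yv_len_def by (rule LeastI[of _ n]) (rule yv_n)

lemma yv_len_le: "yv_len \<le> n"
  unfolding yv_len_def by (rule Least_le) (rule yv_n)

lemma yv_nonzero: "l < yv_len \<Longrightarrow> yv l \<noteq> (\<lambda>_. 0)"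
  unfolding yv_len_def using not_less_Least by blast

lemma yv_inj: "inj_on yv {..<yv_len}"
proof (rule inj_onI)
  fix a b assume a: "a \<in> {..<yv_len}" and b: "b \<in> {..<yv_len}" and eq: "yv a = yv b"
  have "(\<lambda>m. (\<beta> * inverse \<gamma> ^ a) * yv a m) = (\<lambda>m. (\<beta> * inverse \<gamma> ^ b) * yv a m)"
    using act_Ge_yv[of a] act_Ge_yv[of b] eq by simp
  moreover obtain m where "yv a m \<noteq> 0"
    using yv_nonzero[of a] a by (auto simp: fun_eq_iff)
  ultimately have "\<beta> * inverse \<gamma> ^ a = \<beta> * inverse \<gamma> ^ b"
    by (metis mult_right_cancel)
  then show "a = b"
    using eigenvalue_inj a b yv_len_le by auto
qed

lemma yv_independent: "VS.independent (yv ` {..<yv_len})"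
proof
  assume "VS.dependent (yv ` {..<yv_len})"
  then obtain c where c: "\<exists>x\<in>yv ` {..<yv_len}. c x \<noteq> 0" "(\<Sum>x\<in>yv ` {..<yv_len}. vsc (c x) x) = 0"
    using VS.dependent_finite[of "yv ` {..<yv_len}"] by auto
  have "(\<Sum>l\<in>{..<yv_len}. c (yv l) * yv l m) = 0" for m
  proof -
    have "0 = (\<Sum>x\<in>yv ` {..<yv_len}. vsc (c x) x) m"
      using c(2) by (simp add: zero_vec)
    also have "\<dots> = (\<Sum>l\<in>{..<yv_len}. c (yv l) * yv l m)"
      by (simp add: sum.reindex[OF yv_inj] sum_fun_apply vsc_def)
    finally show ?thesis by simp
  qed
  then have "\<forall>l\<in>{..<yv_len}. c (yv l) = 0"
    using yv_len_le yv_nonzero by (intro yv_lin_indep) auto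
  then show False
    using c(1) by auto
qed

abbreviation yspan :: "'k vec set" where
  "yspan \<equiv> VS.span (range yv)"

lemma yspan_subset_Vc: "yspan \<subseteq> Vc p"
proof (rule VS.span_minimal)
  show "VS.subspace (Vc p)"
    unfolding VS.subspace_def by (auto simp: Vc_def vsc_def)
qed (auto simp: yv_Vc)

lemma yspan_subset_span_initial: "yspan \<subseteq> VS.span (yv ` {..<yv_len})"
proof (rule VS.span_minimal[OF _ VS.subspace_span])
  have "yv l \<in> VS.span (yv ` {..<yv_len})" for l
  proof (cases "l < yv_len")
    case True
    then show ?thesis by (intro VS.span_base) auto
  next
    case False
    then show ?thesis
      using yv_zero_from[OF yv_len_zero] VS.span_zero by (simp add: zero_vec)
  qed
  then show "range yv \<subseteq> VS.span (yv ` {..<yv_len})"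
    by auto
qed

lemma act_yspan:
  assumes h: "h \<in> Hc n" and x: "x \<in> yspan"
  shows "act h x \<in> yspan"
proof (rule span_closed_under[where F = "act h", OF _ _ _ x])
  fix x assume "x \<in> range yv"
  then obtain l where x: "x = yv l"
    by auto
  have "act (bas b) (yv l) \<in> yspan" if "b \<in> supp h" for b
  proof -
    have "valid n b"
      using Hc_valid[OF h] that by (simp add: supp_def)
    then obtain c where "act (bas b) (yv l) = (\<lambda>m. c * yv (l + fst b) m)"
      using act_bas_yv by blast
    moreover have "vsc c (yv (l + fst b)) \<in> yspan"
      by (intro VS.span_scale VS.span_base) simp
    ultimately show ?thesis
      by (simp add: vsc_def)
  qed
  then show "act h x \<in> yspan"
    unfolding x act_eq_sum_bas[OF h yv_Vc] by (intro span_sum Hc_finite_supp[OF h])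
next
  fix c x y assume "x \<in> range yv" "y \<in> yspan"
  then have xV: "x \<in> Vc p" and yV: "y \<in> Vc p"
    using yv_Vc yspan_subset_Vc by auto
  show "act h (\<lambda>m. c * x m + y m) = (\<lambda>m. c * act h x m + act h y m)"
    using act_add[OF h Vc_scale[OF xV] yV] act_scale[OF h xV] by simp
qed (rule act_zero[OF h])

lemma co_yspan:
  assumes x: "x \<in> yspan"
  shows "co x b \<in> yspan"
proof (rule span_closed_under[where F = "\<lambda>x. co x b", OF _ _ _ x])
  fix x assume "x \<in> range yv"
  then obtain k where x: "x = yv k"
    by auto
  show "co x b \<in> yspan"
    unfolding x co_yv by (intro span_sum) (auto intro: VS.span_base)
next
  fix c x y assume "x \<in> range yv" "y \<in> yspan"
  then have xV: "x \<in> Vc p" and yV: "y \<in> Vc p"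
    using yv_Vc yspan_subset_Vc by auto
  show "co (\<lambda>m. c * x m + y m) b = (\<lambda>m. c * co x b m + co y b m)"
    using co_add[OF Vc_scale[OF xV] yV] co_scale[OF xV] by simp
qed (rule co_zero)

lemma yspan_eq_Vc:
  assumes "is_simple_YD n w \<gamma> p act co"
  shows "yspan = Vc p"
proof -
  have zero_in: "(\<lambda>_. 0) \<in> yspan"
    using VS.span_zero by (simp add: zero_vec)
  have add_in: "(\<lambda>m. x m + y m) \<in> yspan" if "x \<in> yspan" "y \<in> yspan" for x y
    using VS.span_add[OF that] by (simp add: plus_vec)
  have scale_in: "(\<lambda>m. c * x m) \<in> yspan" if "x \<in> yspan" for c x
    using VS.span_scale[OF that, of c] by (simp add: vsc_def)
  have closed: "yspan \<subseteq> Vc p \<and> (\<lambda>_. 0) \<in> yspan \<and>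
      (\<forall>x\<in>yspan. \<forall>y\<in>yspan. (\<lambda>m. x m + y m) \<in> yspan) \<and> (\<forall>c. \<forall>x\<in>yspan. (\<lambda>m. c * x m) \<in> yspan) \<and>
      (\<forall>h\<in>Hc n. \<forall>x\<in>yspan. act h x \<in> yspan) \<and> (\<forall>x\<in>yspan. \<forall>b. co x b \<in> yspan)"
    using yspan_subset_Vc zero_in add_in scale_in act_yspan co_yspan by simp
  have simple_W: "\<forall>W. W \<subseteq> Vc p \<and> (\<lambda>_. 0) \<in> W \<and>
         (\<forall>u\<in>W. \<forall>v\<in>W. (\<lambda>m. u m + v m) \<in> W) \<and> (\<forall>c. \<forall>v\<in>W. (\<lambda>m. c * v m) \<in> W) \<and>
         (\<forall>h\<in>Hc n. \<forall>v\<in>W. act h v \<in> W) \<and> (\<forall>v\<in>W. \<forall>b. co v b \<in> W)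
       \<longrightarrow> W = {\<lambda>_. 0} \<or> W = Vc p"
    using assms unfolding is_simple_YD_def by (rule conjunct2)
  have "yspan = {\<lambda>_. 0} \<or> yspan = Vc p"
    by (rule simple_W[rule_format, OF closed])
  moreover have "yv 0 \<in> yspan"
    by (rule VS.span_base) simp
  ultimately show ?thesis
    using v_nonzero unfolding yv_0 by blast
qed

definition unit_vec :: "nat \<Rightarrow> 'k vec" where
  "unit_vec j = (\<lambda>m. if m = j then 1 else 0)"

lemma inj_unit_vec: "inj unit_vec"
  by (rule injI) (auto simp: unit_vec_def fun_eq_iff split: if_splits)

lemma unit_vec_independent: "VS.independent (unit_vec ` {..p})"
proof
  assume "VS.dependent (unit_vec ` {..p})"
  then obtain c where c: "\<exists>x\<in>unit_vec ` {..p}. c x \<noteq> 0" "(\<Sum>x\<in>unit_vec ` {..p}. vsc (c x) x) = 0"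
    using VS.dependent_finite[of "unit_vec ` {..p}"] by auto
  then obtain j where j: "j \<le> p" "c (unit_vec j) \<noteq> 0"
    by auto
  have "0 = (\<Sum>x\<in>unit_vec ` {..p}. vsc (c x) x) j"
    using c(2) by (simp add: zero_vec)
  also have "\<dots> = (\<Sum>l\<le>p. c (unit_vec l) * unit_vec l j)"
    by (simp add: sum.reindex[OF inj_on_subset[OF inj_unit_vec]] sum_fun_apply vsc_def)
  also have "\<dots> = (\<Sum>l\<le>p. if l = j then c (unit_vec l) else 0)"
    by (rule sum.cong) (auto simp: unit_vec_def)
  also have "\<dots> = c (unit_vec j)"
    using j by simp
  finally show False
    using j by simp
qed

lemma Vc_subset_span_unit_vec: "Vc p \<subseteq> VS.span (unit_vec ` {..p})"
proof
  fix f :: "'k vec" assume f: "f \<in> Vc p"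
  have "f m = (\<Sum>j\<le>p. f j * unit_vec j m)" for m
  proof -
    have "(\<Sum>j\<le>p. f j * unit_vec j m) = (\<Sum>j\<le>p. if m = j then f j else 0)"
      by (rule sum.cong) (auto simp: unit_vec_def)
    then show ?thesis
      using f by (auto simp: Vc_def)
  qed
  then have "f = (\<lambda>m. \<Sum>j\<le>p. f j * unit_vec j m)"
    by blast
  also have "\<dots> \<in> VS.span (unit_vec ` {..p})"
    by (rule span_sum) (auto intro: VS.span_base)
  finally show "f \<in> VS.span (unit_vec ` {..p})" .
qed

lemma yv_len_eq_dim:
  assumes "is_simple_YD n w \<gamma> p act co"
  shows "yv_len = Suc p"
proof -
  have "unit_vec ` {..p} \<subseteq> VS.span (yv ` {..<yv_len})"
    using yspan_eq_Vc[OF assms] yspan_subset_span_initial by (auto simp: unit_vec_def Vc_def)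
  then have "card (unit_vec ` {..p}) \<le> card (yv ` {..<yv_len})"
    using VS.independent_span_bound[OF finite_imageI[OF finite_lessThan] unit_vec_independent] by blast
  moreover have "yv ` {..<yv_len} \<subseteq> VS.span (unit_vec ` {..p})"
    using yv_Vc Vc_subset_span_unit_vec by blast
  then have "card (yv ` {..<yv_len}) \<le> card (unit_vec ` {..p})"
    using VS.independent_span_bound[OF finite_imageI[OF finite_atMost] yv_independent] by blast
  ultimately show ?thesis
    using card_image[OF yv_inj] card_image[OF inj_on_subset[OF inj_unit_vec]] by simp
qed

lemma C_Suc_dim_eq_0:
  assumes "is_simple_YD n w \<gamma> p act co" "l \<le> p"
  shows "C (Suc p) l = (\<lambda>_. 0)"
proof
  fix b
  have yv_Suc_p: "yv (Suc p) = (\<lambda>_. 0)"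
    using yv_len_zero yv_len_eq_dim[OF assms(1)] by simp
  have "(\<Sum>l\<le>Suc p. C (Suc p) l b * yv l m) = 0" for m
    using co_yv[of "Suc p" b] co_zero unfolding yv_Suc_p by (metis)
  then have "(\<Sum>l\<in>{..p}. C (Suc p) l b * yv l m) = 0" for m
    using yv_Suc_p by (simp del: cc.simps)
  then have "\<forall>l\<in>{..p}. C (Suc p) l b = 0"
    using yv_len_eq_dim[OF assms(1)] yv_len_le yv_nonzero by (intro yv_lin_indep) auto
  then show "C (Suc p) l b = 0"
    using assms(2) by simp
qed

end

theorem lemma3p15:
  fixes n w p :: nat and \<gamma> \<alpha> \<beta> :: "'k::field_char_0" and r i :: int
    and act :: "'k hel \<Rightarrow> 'k vec \<Rightarrow> 'k vec" and co :: "'k vec \<Rightarrow> bidx \<Rightarrow> 'k vec"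
    and v :: "'k vec"
  assumes alg_closed: "\<forall>q :: 'k poly. degree q > 0 \<longrightarrow> (\<exists>z. poly q z = 0)"
    and n_pos: "0 < n" and w_pos: "0 < w"
    and prim: "\<gamma> ^ n = 1" "\<forall>m. 0 < m \<and> m < n \<longrightarrow> \<gamma> ^ m \<noteq> 1"
    and simple: "is_simple_YD n w \<gamma> p act co"
    and std: "standard n w p act co v \<alpha> \<beta> r i"
    and beta_n: "\<beta> ^ n = 1"
  shows "\<forall>l\<le>p. cc n w \<gamma> \<beta> r i (Suc p) l = (\<lambda>_. 0)"
proof (cases "n = 1")
  case True
  have "\<gamma> = 1" "\<beta> = 1"
    using prim(1) beta_n True by simp_all
  then show ?thesis
    unfolding True by (intro allI impI cc_1_below_diag) auto
next
  case False
  then have "1 < n"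
    using n_pos by simp
  moreover have "is_YD n w \<gamma> p act co"
    using simple by (simp add: is_simple_YD_def)
  ultimately interpret standard_element n w \<gamma> p act co v \<alpha> \<beta> r i
    using std beta_n prim by unfold_locales auto
  show ?thesis
    using C_Suc_dim_eq_0[OF simple] by blast
qed

end
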